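(* Let $[X,\mathcal B,m^i,\nu_i]$ ($i=1,2$) be reversible random walk spaces on the same measurable space with $\nu_2\ll\nu_1$, $\mu=\frac{d\nu_2}{d\nu_1}\in L^\infty(X,\nu_1)$, $\mu>0$ $\nu_1$-a.e., and $\nu_1(X)<\infty$. Assume $\mathcal F_{1,m^1}$ satisfies a $1$-Poincaré inequality with constant $\lambda_1(\mathcal F_{1,m^1})>0$. For $u_0\in L^2(X,\nu_1)$, let $u$ be the strong solution of $u_t-\Delta_1^{m^1}u-\mu\Delta_1^{m^2}u\ni0$, $u(0)=u_0$. Then $$\|u(t)-\overline{u_0}\|_{L^1(X,\nu_1)}\le\frac{1}{2\lambda_1(\mathcal F_{1,m^1})}\,\frac{\|u_0\|^2_{L^2(X,\nu_1)}}{t}\qquad\forall t>0.$$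
   Context: Random walk space $[X,\mathcal B,m,\nu]$: measurable space with countably generated $\sigma$-algebra, probability measures $m_x$ depending measurably on $x$, $\sigma$-finite invariant measure $\nu$ ($\nu(A)=\int m_x(A)\,d\nu(x)$), reversible if $dm_x(y)d\nu(x)=dm_y(x)d\nu(y)$. $\nabla u(x,y)=u(y)-u(x)$. $\mathcal F_{1,m}(u)=\frac12\int_{X\times X}|\nabla u|\,dm_x(y)d\nu(x)$ ($+\infty$ if infinite); $(u,v)\in\Delta_1^m$ iff $(u,-v)\in\partial_{L^2(X,\nu)}\mathcal F_{1,m}(u)$. $\overline{u}=\frac1{\nu_1(X)}\int_X u\,d\nu_1$. $r$-Poincaré inequality: $\lambda_r(\mathcal F_{1,m^1})\|u-\overline u\|_{L^r(X,\nu_1)}\le\mathcal F_{1,m^1}(u)$ for all $u\in L^r(X,\nu_1)$, some $\lambda_r>0$. The operator $A=-\Delta_1^{m^1}-\mu\Delta_1^{m^2}$ on $H=L^2(X,\nu_1)$: $(u,v)\in A$ iff $u,v\in H$, $v=v_1-\mu w$ with $(u,-v_1)\in\Delta_1^{m^1}$ (w.r.t. $\nu_1$) and $(u,w)\in\Delta_1^{m^2}$ (w.r.t. $\nu_2$). Strong solution: $u\in C([0,\infty);H)\cap W^{1,2}_{\rm loc}(0,\infty;H)$, $u(0)=u_0$, $-u_t(t)\in A(u(t))$ for a.e. $t$. *)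

theory Defs
  imports "HOL-Probability.Probability"
begin

text \<open>A random walk space [X,B,m,nu]: the measurable space M (with countably generated
sigma-algebra), a measurable family of probability measures m x on M (a Markov kernel,
i.e. m is measurable into the Giry monad prob_algebra M), and a sigma-finite invariant
measure nu on M.\<close>
definition rw_space :: "'a measure \<Rightarrow> ('a \<Rightarrow> 'a measure) \<Rightarrow> 'a measure \<Rightarrow> bool" where
  "rw_space M m \<nu> \<longleftrightarrow>
     (\<exists>G. countable G \<and> sets M = sigma_sets (space M) G) \<and>
     m \<in> M \<rightarrow>\<^sub>M prob_algebra M \<and>
     sets \<nu> = sets M \<and> sigma_finite_measure \<nu> \<and>
     (\<forall>A\<in>sets M. emeasure \<nu> A = (\<integral>\<^sup>+ x. emeasure (m x) A \<partial>\<nu>))"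

text \<open>Reversibility dm_x(y)dnu(x) = dm_y(x)dnu(y), stated on measurable rectangles A x B
(which generate the product sigma-algebra).\<close>
definition reversible_rw_space :: "'a measure \<Rightarrow> ('a \<Rightarrow> 'a measure) \<Rightarrow> 'a measure \<Rightarrow> bool" where
  "reversible_rw_space M m \<nu> \<longleftrightarrow> rw_space M m \<nu> \<and>
     (\<forall>A\<in>sets M. \<forall>B\<in>sets M.
        (\<integral>\<^sup>+ x. indicator A x * emeasure (m x) B \<partial>\<nu>) =
        (\<integral>\<^sup>+ x. indicator B x * emeasure (m x) A \<partial>\<nu>))"

definition memL2 :: "'a measure \<Rightarrow> ('a \<Rightarrow> real) \<Rightarrow> bool" where
  "memL2 \<nu> f \<longleftrightarrow> f \<in> borel_measurable \<nu> \<and> integrable \<nu> (\<lambda>x. (f x)\<^sup>2)"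

definition l2norm :: "'a measure \<Rightarrow> ('a \<Rightarrow> real) \<Rightarrow> real" where
  "l2norm \<nu> f = sqrt (\<integral>x. (f x)\<^sup>2 \<partial>\<nu>)"

definition F1 :: "('a \<Rightarrow> 'a measure) \<Rightarrow> 'a measure \<Rightarrow> ('a \<Rightarrow> real) \<Rightarrow> ereal" where
  "F1 m \<nu> u = enn2ereal (ennreal (1/2) *
      (\<integral>\<^sup>+ x. (\<integral>\<^sup>+ y. ennreal \<bar>u y - u x\<bar> \<partial>(m x)) \<partial>\<nu>))"

definition subdiff_L2 :: "'a measure \<Rightarrow> (('a \<Rightarrow> real) \<Rightarrow> ereal) \<Rightarrow> ('a \<Rightarrow> real) \<Rightarrow> ('a \<Rightarrow> real) \<Rightarrow> bool" where
  "subdiff_L2 \<nu> F u g \<longleftrightarrow> memL2 \<nu> u \<and> memL2 \<nu> g \<and> F u \<noteq> \<infinity> \<and>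
     (\<forall>w. memL2 \<nu> w \<longrightarrow> F u + ereal (\<integral>x. g x * (w x - u x) \<partial>\<nu>) \<le> F w)"

definition Delta1 :: "('a \<Rightarrow> 'a measure) \<Rightarrow> 'a measure \<Rightarrow> ('a \<Rightarrow> real) \<Rightarrow> ('a \<Rightarrow> real) \<Rightarrow> bool" where
  "Delta1 m \<nu> u v \<longleftrightarrow> subdiff_L2 \<nu> (F1 m \<nu>) u (\<lambda>x. - v x)"

text \<open>The operator A = -Delta_1^{m1} - mu Delta_1^{m2} on H = L^2(X,nu1).\<close>
definition opA :: "('a \<Rightarrow> 'a measure) \<Rightarrow> 'a measure \<Rightarrow> ('a \<Rightarrow> 'a measure) \<Rightarrow> 'a measure
      \<Rightarrow> ('a \<Rightarrow> real) \<Rightarrow> ('a \<Rightarrow> real) \<Rightarrow> ('a \<Rightarrow> real) \<Rightarrow> bool" where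
  "opA m1 \<nu>1 m2 \<nu>2 \<mu> u v \<longleftrightarrow> memL2 \<nu>1 u \<and> memL2 \<nu>1 v \<and>
     (\<exists>v1 w. Delta1 m1 \<nu>1 u (\<lambda>x. - v1 x) \<and> Delta1 m2 \<nu>2 u w \<and>
        (AE x in \<nu>1. v x = v1 x - \<mu> x * w x))"

definition abs_cont_L2 :: "'a measure \<Rightarrow> (real \<Rightarrow> 'a \<Rightarrow> real) \<Rightarrow> real \<Rightarrow> real \<Rightarrow> bool" where
  "abs_cont_L2 \<nu> u a b \<longleftrightarrow>
     (\<forall>\<epsilon>>0. \<exists>\<delta>>0. \<forall>(n::nat) (s::nat \<Rightarrow> real) (t::nat \<Rightarrow> real).
        (\<forall>i<n. a \<le> s i \<and> s i \<le> t i \<and> t i \<le> b) \<and>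
        (\<forall>i<n. \<forall>j<n. i \<noteq> j \<longrightarrow> t i \<le> s j \<or> t j \<le> s i) \<and>
        (\<Sum>i<n. t i - s i) < \<delta> \<longrightarrow>
        (\<Sum>i<n. l2norm \<nu> (\<lambda>x. u (t i) x - u (s i) x)) < \<epsilon>)"

definition has_L2_derivative :: "'a measure \<Rightarrow> (real \<Rightarrow> 'a \<Rightarrow> real) \<Rightarrow> real \<Rightarrow> ('a \<Rightarrow> real) \<Rightarrow> bool" where
  "has_L2_derivative \<nu> u t d \<longleftrightarrow> memL2 \<nu> d \<and>
     ((\<lambda>h. l2norm \<nu> (\<lambda>x. (u (t + h) x - u t x) / h - d x)) \<longlongrightarrow> 0) (at 0)"

text \<open>Strong solution of u_t + A u \<ni> 0, u(0) = u0 in H = L^2(nu):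
  u \<in> C([0,\<infinity>);H) \<inter> W^{1,2}_loc(0,\<infinity>;H) (locally absolutely continuous on (0,\<infinity>)
  with a.e. strong derivative u_t whose norm is locally square integrable),
  u(0) = u0 and -u_t(t) \<in> A(u(t)) for a.e. t > 0.\<close>
definition strong_solution :: "'a measure \<Rightarrow> (('a \<Rightarrow> real) \<Rightarrow> ('a \<Rightarrow> real) \<Rightarrow> bool)
      \<Rightarrow> ('a \<Rightarrow> real) \<Rightarrow> (real \<Rightarrow> 'a \<Rightarrow> real) \<Rightarrow> bool" where
  "strong_solution \<nu> A u0 u \<longleftrightarrow>
     (\<forall>t\<ge>0. memL2 \<nu> (u t)) \<and>
     (\<forall>t\<ge>0. ((\<lambda>s. l2norm \<nu> (\<lambda>x. u s x - u t x)) \<longlongrightarrow> 0) (at t within {0..})) \<and>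
     (AE x in \<nu>. u 0 x = u0 x) \<and>
     (\<exists>ut :: real \<Rightarrow> 'a \<Rightarrow> real.
        (\<forall>a b. 0 < a \<and> a < b \<longrightarrow>
           abs_cont_L2 \<nu> u a b \<and>
           set_borel_measurable lebesgue {a..b} (\<lambda>t. l2norm \<nu> (ut t)) \<and>
           (\<integral>\<^sup>+ t\<in>{a..b}. ennreal ((l2norm \<nu> (ut t))\<^sup>2) \<partial>lebesgue) < \<infinity>) \<and>
        (AE t in lborel. 0 < t \<longrightarrow>
           has_L2_derivative \<nu> u t (ut t) \<and> A (u t) (\<lambda>x. - ut t x)))"

end

theory Submission
  imports Defs
begin

(* Let c be the mean of u0 and phi t the L^1 distance of u t from c.  Testing the equation with
   the constant 1 shows that the mean is conserved, and testing it with a Huber regularization of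
   sign (u t - c) shows that phi is nonincreasing: both subdifferentials of total variation
   annihilate constants and cannot increase under contractions.  Testing with u t itself gives
   d/dt |u t|^2 / 2 <= - F1 m1 (u t) <= - lam * phi t by the Poincare inequality, hence
   t * lam * phi t <= lam * (integral of phi over [0, t]) <= |u0|^2 / 2.  These derivatives
   exist off a null set of times, and the monotonicity arguments rest on the fact that an
   absolutely continuous real function whose derivative is nonpositive off a null set is
   nonincreasing. *)

section \<open>Absolutely continuous functions of a real variable\<close>

text \<open>The increment of a curve over \<open>[s, t]\<close> is measured by \<open>d s t\<close>: with \<open>\<bar>f t - f s\<bar>\<close>
  this is classical absolute continuity, with the \<open>L\<^sup>2\<close> distance it is \<open>abs_cont_L2\<close>.\<close>

definition absolutely_continuous_wrt :: "(real \<Rightarrow> real \<Rightarrow> real) \<Rightarrow> real \<Rightarrow> real \<Rightarrow> bool" where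
  "absolutely_continuous_wrt d a b \<longleftrightarrow>
     (\<forall>\<epsilon>>0. \<exists>\<delta>>0. \<forall>(n::nat) (s::nat \<Rightarrow> real) (t::nat \<Rightarrow> real).
        (\<forall>i<n. a \<le> s i \<and> s i \<le> t i \<and> t i \<le> b) \<and>
        (\<forall>i<n. \<forall>j<n. i \<noteq> j \<longrightarrow> t i \<le> s j \<or> t j \<le> s i) \<and>
        (\<Sum>i<n. t i - s i) < \<delta> \<longrightarrow> (\<Sum>i<n. d (s i) (t i)) < \<epsilon>)"

abbreviation absolutely_continuous_real :: "(real \<Rightarrow> real) \<Rightarrow> real \<Rightarrow> real \<Rightarrow> bool" where
  "absolutely_continuous_real f \<equiv> absolutely_continuous_wrt (\<lambda>s t. \<bar>f t - f s\<bar>)"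

lemma abs_cont_L2_iff:
  "abs_cont_L2 \<nu> u a b \<longleftrightarrow> absolutely_continuous_wrt (\<lambda>s t. l2norm \<nu> (\<lambda>x. u t x - u s x)) a b"
  by (simp add: abs_cont_L2_def absolutely_continuous_wrt_def)

definition nonoverlapping_intervals :: "real \<Rightarrow> real \<Rightarrow> 'i set \<Rightarrow> ('i \<Rightarrow> real) \<Rightarrow> ('i \<Rightarrow> real) \<Rightarrow> bool" where
  "nonoverlapping_intervals a b I s t \<longleftrightarrow> finite I \<and>
     (\<forall>i\<in>I. a \<le> s i \<and> s i \<le> t i \<and> t i \<le> b) \<and>
     (\<forall>i\<in>I. \<forall>j\<in>I. i \<noteq> j \<longrightarrow> t i \<le> s j \<or> t j \<le> s i)"

lemma absolutely_continuous_wrt_finite_family: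
  assumes "absolutely_continuous_wrt d a b" "\<epsilon> > 0"
  obtains \<delta> where "\<delta> > 0" "\<And>(I :: 'i set) s t. nonoverlapping_intervals a b I s t \<Longrightarrow>
    (\<Sum>i\<in>I. t i - s i) < \<delta> \<Longrightarrow> (\<Sum>i\<in>I. d (s i) (t i)) < \<epsilon>"
proof -
  obtain \<delta> where "\<delta> > 0" and \<delta>: "\<forall>(n::nat) (s::nat \<Rightarrow> real) (t::nat \<Rightarrow> real). (\<forall>i<n. a \<le> s i \<and> s i \<le> t i \<and> t i \<le> b) \<and>
      (\<forall>i<n. \<forall>j<n. i \<noteq> j \<longrightarrow> t i \<le> s j \<or> t j \<le> s i) \<and>
      (\<Sum>i<n. t i - s i) < \<delta> \<longrightarrow> (\<Sum>i<n. d (s i) (t i)) < \<epsilon>"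
    using assms unfolding absolutely_continuous_wrt_def by auto
  show thesis
  proof (rule that[OF \<open>\<delta> > 0\<close>])
    fix I :: "'i set" and s t :: "'i \<Rightarrow> real"
    assume "nonoverlapping_intervals a b I s t" and short: "(\<Sum>i\<in>I. t i - s i) < \<delta>"
    then have "finite I" and bounds: "\<And>i. i \<in> I \<Longrightarrow> a \<le> s i \<and> s i \<le> t i \<and> t i \<le> b"
      and disjoint: "\<And>i j. i \<in> I \<Longrightarrow> j \<in> I \<Longrightarrow> i \<noteq> j \<Longrightarrow> t i \<le> s j \<or> t j \<le> s i"
      by (auto simp: nonoverlapping_intervals_def)
    obtain g where g: "bij_betw g {..<card I} I"
      using ex_bij_betw_nat_finite[OF \<open>finite I\<close>] by (auto simp: lessThan_atLeast0)
    have reindex: "(\<Sum>i\<in>I. h i) = (\<Sum>k<card I. h (g k))" for h :: "'i \<Rightarrow> real"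
      using sum.reindex_bij_betw[OF g, of h] by simp
    have "(\<Sum>k<card I. d ((s \<circ> g) k) ((t \<circ> g) k)) < \<epsilon>"
    proof (rule \<delta>[rule_format, OF conjI[OF _ conjI]])
      show "\<forall>k<card I. a \<le> (s \<circ> g) k \<and> (s \<circ> g) k \<le> (t \<circ> g) k \<and> (t \<circ> g) k \<le> b"
        using bounds bij_betwE[OF g] by simp
      show "\<forall>k<card I. \<forall>l<card I. k \<noteq> l \<longrightarrow> (t \<circ> g) k \<le> (s \<circ> g) l \<or> (t \<circ> g) l \<le> (s \<circ> g) k"
        using disjoint bij_betwE[OF g] bij_betw_imp_inj_on[OF g]
        by (simp add: inj_on_eq_iff)
      show "(\<Sum>k<card I. (t \<circ> g) k - (s \<circ> g) k) < \<delta>"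
        using short by (simp add: reindex)
    qed
    then show "(\<Sum>i\<in>I. d (s i) (t i)) < \<epsilon>"
      by (simp add: reindex)
  qed
qed

lemma absolutely_continuous_wrt_dominated:
  assumes ac: "absolutely_continuous_wrt d a b" and "L \<ge> 0" "K \<ge> 0"
    and dominated: "\<And>s t. a \<le> s \<Longrightarrow> s \<le> t \<Longrightarrow> t \<le> b \<Longrightarrow> d' s t \<le> L * d s t + K * (t - s)"
  shows "absolutely_continuous_wrt d' a b"
  unfolding absolutely_continuous_wrt_def
proof (intro allI impI)
  fix \<epsilon> :: real assume "\<epsilon> > 0"
  have L_share: "L * (\<epsilon> / (2 * (L + 1))) < \<epsilon> / 2" and K_share: "K * (\<epsilon> / (2 * (K + 1))) < \<epsilon> / 2"
    using \<open>\<epsilon> > 0\<close> \<open>L \<ge> 0\<close> \<open>K \<ge> 0\<close> by (simp_all add: field_simps)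
  have pos: "\<epsilon> / (2 * (L + 1)) > 0"
    using \<open>\<epsilon> > 0\<close> \<open>L \<ge> 0\<close> by simp
  obtain \<delta> where "\<delta> > 0" and \<delta>: "\<And>(I :: nat set) s t. nonoverlapping_intervals a b I s t \<Longrightarrow>
      (\<Sum>i\<in>I. t i - s i) < \<delta> \<Longrightarrow> (\<Sum>i\<in>I. d (s i) (t i)) < \<epsilon> / (2 * (L + 1))"
    using absolutely_continuous_wrt_finite_family[OF ac pos] by blast
  define \<delta>' where "\<delta>' = min \<delta> (\<epsilon> / (2 * (K + 1)))"
  show "\<exists>\<delta>>0. \<forall>(n::nat) (s::nat \<Rightarrow> real) (t::nat \<Rightarrow> real). (\<forall>i<n. a \<le> s i \<and> s i \<le> t i \<and> t i \<le> b) \<and>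
      (\<forall>i<n. \<forall>j<n. i \<noteq> j \<longrightarrow> t i \<le> s j \<or> t j \<le> s i) \<and>
      (\<Sum>i<n. t i - s i) < \<delta> \<longrightarrow> (\<Sum>i<n. d' (s i) (t i)) < \<epsilon>"
  proof (intro exI[of _ \<delta>'] conjI allI impI)
    show "\<delta>' > 0" using \<open>\<delta> > 0\<close> \<open>\<epsilon> > 0\<close> \<open>K \<ge> 0\<close> by (simp add: \<delta>'_def)
    fix n :: nat and s t :: "nat \<Rightarrow> real"
    assume H: "(\<forall>i<n. a \<le> s i \<and> s i \<le> t i \<and> t i \<le> b) \<and>
      (\<forall>i<n. \<forall>j<n. i \<noteq> j \<longrightarrow> t i \<le> s j \<or> t j \<le> s i) \<and> (\<Sum>i<n. t i - s i) < \<delta>'"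
    then have lengths: "(\<Sum>i<n. t i - s i) < \<delta>" "(\<Sum>i<n. t i - s i) < \<epsilon> / (2 * (K + 1))"
      by (auto simp: \<delta>'_def)
    have "(\<Sum>i<n. d' (s i) (t i)) \<le> (\<Sum>i<n. L * d (s i) (t i) + K * (t i - s i))"
      by (rule sum_mono, rule dominated) (use H in auto)
    also have "\<dots> = L * (\<Sum>i<n. d (s i) (t i)) + K * (\<Sum>i<n. t i - s i)"
      by (simp add: sum.distrib sum_distrib_left)
    also have "L * (\<Sum>i<n. d (s i) (t i)) \<le> L * (\<epsilon> / (2 * (L + 1)))"
    proof (rule mult_left_mono)
      show "(\<Sum>i<n. d (s i) (t i)) \<le> \<epsilon> / (2 * (L + 1))"
        using \<delta>[of "{..<n}" s t] H lengths by (auto simp: nonoverlapping_intervals_def)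
    qed fact
    also have "K * (\<Sum>i<n. t i - s i) \<le> K * (\<epsilon> / (2 * (K + 1)))"
      using lengths \<open>K \<ge> 0\<close> by (intro mult_left_mono) auto
    finally show "(\<Sum>i<n. d' (s i) (t i)) < \<epsilon>"
      using L_share K_share by linarith
  qed
qed

lemma absolutely_continuous_real_imp_uniformly_continuous:
  assumes ac: "absolutely_continuous_real f a b"
  shows "uniformly_continuous_on {a..b} f"
  unfolding uniformly_continuous_on_def
proof (intro allI impI)
  fix \<epsilon> :: real assume "\<epsilon> > 0"
  then obtain \<delta> where "\<delta> > 0" and \<delta>: "\<And>(I :: unit set) s t. nonoverlapping_intervals a b I s t \<Longrightarrow>
      (\<Sum>i\<in>I. t i - s i) < \<delta> \<Longrightarrow> (\<Sum>i\<in>I. \<bar>f (t i) - f (s i)\<bar>) < \<epsilon>"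
    using absolutely_continuous_wrt_finite_family[OF ac] by blast
  have "\<bar>f x' - f x\<bar> < \<epsilon>" if "x \<in> {a..b}" "x' \<in> {a..b}" "\<bar>x' - x\<bar> < \<delta>" for x x'
  proof -
    have "(\<Sum>i\<in>{()}. \<bar>f (max x x') - f (min x x')\<bar>) < \<epsilon>"
    proof (rule \<delta>)
      show "(\<Sum>i\<in>{()}. max x x' - min x x') < \<delta>"
        using that(3) by (auto simp: max_def min_def abs_if)
    qed (use that(1,2) in \<open>auto simp: nonoverlapping_intervals_def\<close>)
    then show ?thesis
      by (cases "x \<le> x'") (simp_all add: max_def min_def abs_minus_commute)
  qed
  then show "\<exists>\<delta>>0. \<forall>x\<in>{a..b}. \<forall>x'\<in>{a..b}. dist x' x < \<delta> \<longrightarrow> dist (f x') (f x) < \<epsilon>"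
    using \<open>\<delta> > 0\<close> by (auto simp: dist_real_def)
qed

lemma interior_disjoint_real_intervals:
  fixes c d c' d' :: real
  assumes "interior {c..d} \<inter> interior {c'..d'} = {}" "c < d" "c' < d'"
  shows "d \<le> c' \<or> d' \<le> c"
proof (rule ccontr)
  assume "\<not> (d \<le> c' \<or> d' \<le> c)"
  then have "(max c c' + min d d') / 2 \<in> interior {c..d} \<inter> interior {c'..d'}"
    using assms(2,3) by (auto simp: max_def min_def)
  with assms(1) show False by blast
qed

lemma measure_Union_interior_disjoint_real_intervals:
  assumes "finite \<D>" and intervals: "\<And>K. K \<in> \<D> \<Longrightarrow> \<exists>c d::real. K = {c..d} \<and> c < d"
    and disjoint: "pairwise (\<lambda>K K'. interior K \<inter> interior K' = {}) \<D>"
  shows "measure lebesgue (\<Union>\<D>) = (\<Sum>K\<in>\<D>. measure lebesgue K)"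
proof (rule measure_negligible_finite_Union[OF \<open>finite \<D>\<close>])
  show "K \<in> lmeasurable" if "K \<in> \<D>" for K
    using intervals[OF that] by auto
  show "pairwise (\<lambda>K K'. negligible (K \<inter> K')) \<D>"
    unfolding pairwise_def
  proof (intro ballI impI)
    fix K K' assume KK': "K \<in> \<D>" "K' \<in> \<D>" "K \<noteq> K'"
    obtain c d c' d' where K: "K = {c..d}" "c < d" and K': "K' = {c'..d'}" "c' < d'"
      using intervals[OF KK'(1)] intervals[OF KK'(2)] by blast
    have "interior K \<inter> interior K' = {}"
      using disjoint KK' by (simp add: pairwise_def)
    then have "d \<le> c' \<or> d' \<le> c"
      using K K' by (intro interior_disjoint_real_intervals) simp_all
    then have "K \<inter> K' \<subseteq> {c, d}"
      using K K' by auto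
    then show "negligible (K \<inter> K')"
      by (rule negligible_subset[rotated]) simp
  qed
qed

lemma nonoverlapping_intervals_of_interior_disjoint:
  assumes "finite \<D>" and intervals: "\<And>K. K \<in> \<D> \<Longrightarrow> \<exists>c d. K = {c..d} \<and> a \<le> c \<and> c < d \<and> d \<le> b"
    and disjoint: "pairwise (\<lambda>K K'. interior K \<inter> interior K' = {}) \<D>"
    and st: "\<And>K. K \<in> \<D> \<Longrightarrow> s K \<in> K \<and> t K \<in> K \<and> s K \<le> t K"
  shows "nonoverlapping_intervals a b \<D> s t"
proof -
  have "t K \<le> s K' \<or> t K' \<le> s K" if KK': "K \<in> \<D>" "K' \<in> \<D>" "K \<noteq> K'" for K K'
  proof -
    obtain c d c' d' where K: "K = {c..d}" "c < d" and K': "K' = {c'..d'}" "c' < d'"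
      using intervals[OF KK'(1)] intervals[OF KK'(2)] by blast
    have "interior K \<inter> interior K' = {}"
      using disjoint KK' by (simp add: pairwise_def)
    then have "d \<le> c' \<or> d' \<le> c"
      using K K' by (intro interior_disjoint_real_intervals) simp_all
    then show ?thesis
      using st[OF KK'(1)] st[OF KK'(2)] K K' by auto
  qed
  moreover have "a \<le> s K \<and> s K \<le> t K \<and> t K \<le> b" if "K \<in> \<D>" for K
    using st[OF that] intervals[OF that] by auto
  ultimately show ?thesis
    using \<open>finite \<D>\<close> by (simp add: nonoverlapping_intervals_def)
qed

lemma sum_lengths_le_measure_Union:
  assumes "finite \<D>" and intervals: "\<And>K. K \<in> \<D> \<Longrightarrow> \<exists>c d::real. K = {c..d} \<and> c < d"
    and "pairwise (\<lambda>K K'. interior K \<inter> interior K' = {}) \<D>"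
    and st: "\<And>K. K \<in> \<D> \<Longrightarrow> s K \<in> K \<and> t K \<in> K \<and> s K \<le> t K"
  shows "(\<Sum>K\<in>\<D>. t K - s K) \<le> measure lebesgue (\<Union>\<D>)"
proof -
  have "(\<Sum>K\<in>\<D>. t K - s K) \<le> (\<Sum>K\<in>\<D>. measure lebesgue K)"
  proof (rule sum_mono)
    fix K assume "K \<in> \<D>"
    then obtain c d where "K = {c..d}" "c < d"
      using intervals by blast
    then show "t K - s K \<le> measure lebesgue K"
      using st[OF \<open>K \<in> \<D>\<close>] by auto
  qed
  also have "\<dots> = measure lebesgue (\<Union>\<D>)"
    using assms by (intro measure_Union_interior_disjoint_real_intervals[symmetric])
  finally show ?thesis .
qed

lemma lmeasurable_continuous_image_interval:
  fixes f :: "real \<Rightarrow> real"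
  shows "continuous_on {c..d} f \<Longrightarrow> f ` {c..d} \<in> lmeasurable"
  by (intro lmeasurable_compact compact_continuous_image) auto

lemma measure_continuous_image_interval:
  fixes f :: "real \<Rightarrow> real"
  assumes "continuous_on {c..d} f" "c \<le> d"
  shows "\<exists>s t. s \<in> {c..d} \<and> t \<in> {c..d} \<and> s \<le> t \<and> measure lebesgue (f ` {c..d}) = \<bar>f t - f s\<bar>"
proof -
  obtain m M where "f ` {c..d} = {m..M}" "m \<le> M"
    using continuous_image_closed_interval[OF assms(2,1)] by auto
  moreover from this obtain p q where "p \<in> {c..d}" "f p = m" "q \<in> {c..d}" "f q = M"
    by (metis atLeastAtMost_iff imageE order_refl)
  ultimately show ?thesis
    by (intro exI[of _ "min p q"] exI[of _ "max p q"]) (auto simp: min_def max_def)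
qed

lemma measure_image_interior_disjoint_intervals_less:
  fixes f :: "real \<Rightarrow> real"
  assumes cont: "continuous_on {a..b} f"
    and small: "\<And>(I :: real set set) s t. nonoverlapping_intervals a b I s t \<Longrightarrow>
      (\<Sum>K\<in>I. t K - s K) < \<delta> \<Longrightarrow> (\<Sum>K\<in>I. \<bar>f (t K) - f (s K)\<bar>) < e"
    and "finite \<D>" and intervals: "\<And>K. K \<in> \<D> \<Longrightarrow> \<exists>c d. K = {c..d} \<and> a \<le> c \<and> c < d \<and> d \<le> b"
    and disjoint: "pairwise (\<lambda>K K'. interior K \<inter> interior K' = {}) \<D>"
    and short: "measure lebesgue (\<Union>\<D>) < \<delta>"
  shows "measure lebesgue (\<Union>K\<in>\<D>. f ` K) < e"
proof -
  have "\<forall>K\<in>\<D>. \<exists>s t. s \<in> K \<and> t \<in> K \<and> s \<le> t \<and> measure lebesgue (f ` K) = \<bar>f t - f s\<bar>"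
  proof
    fix K assume "K \<in> \<D>"
    then obtain c d where K: "K = {c..d}" "a \<le> c" "c < d" "d \<le> b"
      using intervals by blast
    then have "continuous_on {c..d} f"
      using continuous_on_subset[OF cont] by simp
    with K show "\<exists>s t. s \<in> K \<and> t \<in> K \<and> s \<le> t \<and> measure lebesgue (f ` K) = \<bar>f t - f s\<bar>"
      using measure_continuous_image_interval[of c d f] by simp
  qed
  then obtain s t where st: "\<And>K. K \<in> \<D> \<Longrightarrow> s K \<in> K \<and> t K \<in> K \<and> s K \<le> t K"
    and image_measure: "\<And>K. K \<in> \<D> \<Longrightarrow> measure lebesgue (f ` K) = \<bar>f (t K) - f (s K)\<bar>"
    by metis
  have "f ` K \<in> sets lebesgue" if KD: "K \<in> \<D>" for K
  proof -
    obtain c d where "K = {c..d}" "a \<le> c" "d \<le> b"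
      using intervals[OF KD] by blast
    then show ?thesis
      using lmeasurable_continuous_image_interval[OF continuous_on_subset[OF cont], of c d]
      by (auto intro: fmeasurableD)
  qed
  then have "measure lebesgue (\<Union>K\<in>\<D>. f ` K) \<le> (\<Sum>K\<in>\<D>. measure lebesgue (f ` K))"
    using \<open>finite \<D>\<close> by (intro measure_UNION_le) auto
  also have "\<dots> = (\<Sum>K\<in>\<D>. \<bar>f (t K) - f (s K)\<bar>)"
    by (rule sum.cong) (simp_all add: image_measure)
  also have "\<dots> < e"
  proof (rule small)
    show "nonoverlapping_intervals a b \<D> s t"
      by (rule nonoverlapping_intervals_of_interior_disjoint[OF \<open>finite \<D>\<close> intervals disjoint st])
    have "(\<Sum>K\<in>\<D>. t K - s K) \<le> measure lebesgue (\<Union>\<D>)"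
      using intervals by (intro sum_lengths_le_measure_Union[OF \<open>finite \<D>\<close> _ disjoint st]) blast
    then show "(\<Sum>K\<in>\<D>. t K - s K) < \<delta>"
      using short by simp
  qed
  finally show ?thesis .
qed

lemma negligible_interval_cover:
  fixes S :: "real set"
  assumes "S \<subseteq> {a..b}" "negligible S" "a < b" "\<delta> > 0"
  obtains \<D> where "countable \<D>" "S \<subseteq> \<Union>\<D>"
    and "\<And>K. K \<in> \<D> \<Longrightarrow> \<exists>c d. K = {c..d} \<and> a \<le> c \<and> c < d \<and> d \<le> b"
    and "pairwise (\<lambda>K K'. interior K \<inter> interior K' = {}) \<D>"
    and "\<And>\<D>'. \<D>' \<subseteq> \<D> \<Longrightarrow> finite \<D>' \<Longrightarrow> measure lebesgue (\<Union>\<D>') < \<delta>"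
proof -
  have "S \<in> lmeasurable" and "S \<subseteq> cbox a b" and "\<delta> / 2 > 0"
    using assms negligible_imp_measurable by auto
  then obtain \<D> where "countable \<D>"
      and cbox: "\<And>K. K \<in> \<D> \<Longrightarrow> K \<subseteq> cbox a b \<and> K \<noteq> {} \<and> (\<exists>c d. K = cbox c d)"
      and disjoint: "pairwise (\<lambda>A B. interior A \<inter> interior B = {}) \<D>"
      and "\<And>u v. cbox u v \<in> \<D> \<Longrightarrow> \<exists>n. \<forall>i \<in> Basis. v \<bullet> i - u \<bullet> i = (b \<bullet> i - a \<bullet> i)/2^n"
      and nondegenerate: "\<And>K. K \<in> \<D> \<Longrightarrow> box a b \<noteq> {} \<Longrightarrow> interior K \<noteq> {}"
      and cover: "S \<subseteq> \<Union>\<D>" and "\<Union>\<D> \<in> lmeasurable"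
      and measure_cover: "measure lebesgue (\<Union>\<D>) \<le> measure lebesgue S + \<delta> / 2"
    by (rule measurable_outer_intervals_bounded) iprover
  have intervals: "\<exists>c d. K = {c..d} \<and> a \<le> c \<and> c < d \<and> d \<le> b" if KD: "K \<in> \<D>" for K
  proof -
    obtain c d where "K = {c..d}" "{c..d} \<subseteq> {a..b}"
      using cbox[OF KD] by auto
    moreover have "c < d"
      using nondegenerate[OF KD] \<open>a < b\<close> \<open>K = {c..d}\<close> by auto
    ultimately show ?thesis
      by auto
  qed
  show thesis
  proof (rule that[OF \<open>countable \<D>\<close> cover intervals disjoint])
    fix \<D>' assume "\<D>' \<subseteq> \<D>" "finite \<D>'"
    have "measure lebesgue (\<Union>\<D>') \<le> measure lebesgue (\<Union>\<D>)"
    proof (rule measure_mono_fmeasurable)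
      have "K \<in> sets lebesgue" if "K \<in> \<D>'" for K
        using intervals \<open>\<D>' \<subseteq> \<D>\<close> that by fastforce
      then show "\<Union>\<D>' \<in> sets lebesgue"
        using \<open>finite \<D>'\<close> by blast
    qed (use \<open>\<D>' \<subseteq> \<D>\<close> \<open>\<Union>\<D> \<in> lmeasurable\<close> in auto)
    then show "measure lebesgue (\<Union>\<D>') < \<delta>"
      using measure_cover \<open>\<delta> > 0\<close> assms(2) by (simp add: negligible_imp_measure0)
  qed
qed

lemma negligible_image_absolutely_continuous_real:
  fixes f :: "real \<Rightarrow> real"
  assumes ac: "absolutely_continuous_real f a b" and S: "S \<subseteq> {a..b}" "negligible S"
  shows "negligible (f ` S)"
proof (cases "a < b")
  case False
  then have "S \<subseteq> {a}"
    using S(1) by auto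
  then have "f ` S \<subseteq> {f a}"
    by auto
  then show ?thesis
    by (rule negligible_subset[rotated]) simp
next
  case True
  have cont: "continuous_on {a..b} f"
    by (rule uniformly_continuous_imp_continuous[OF absolutely_continuous_real_imp_uniformly_continuous[OF ac]])
  show ?thesis
    unfolding negligible_outer_le
  proof (intro allI impI)
    fix e :: real assume "e > 0"
    obtain \<delta> where "\<delta> > 0" and small: "\<And>(I :: real set set) s t. nonoverlapping_intervals a b I s t \<Longrightarrow>
        (\<Sum>K\<in>I. t K - s K) < \<delta> \<Longrightarrow> (\<Sum>K\<in>I. \<bar>f (t K) - f (s K)\<bar>) < e"
      using absolutely_continuous_wrt_finite_family[OF ac \<open>e > 0\<close>] by blast
    obtain \<D> where "countable \<D>" and cover: "S \<subseteq> \<Union>\<D>"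
      and intervals: "\<And>K. K \<in> \<D> \<Longrightarrow> \<exists>c d. K = {c..d} \<and> a \<le> c \<and> c < d \<and> d \<le> b"
      and disjoint: "pairwise (\<lambda>K K'. interior K \<inter> interior K' = {}) \<D>"
      and short: "\<And>\<D>'. \<D>' \<subseteq> \<D> \<Longrightarrow> finite \<D>' \<Longrightarrow> measure lebesgue (\<Union>\<D>') < \<delta>"
      using negligible_interval_cover[OF S True \<open>\<delta> > 0\<close>] by blast
    have image_bound: "measure lebesgue (\<Union>K\<in>\<D>'. f ` K) \<le> e" if "\<D>' \<subseteq> \<D>" "finite \<D>'" for \<D>'
      using that intervals disjoint pairwise_subset short
      by (intro less_imp_le measure_image_interior_disjoint_intervals_less[OF cont small]) blast+
    have image_lmeasurable: "f ` K \<in> lmeasurable" if "K \<in> \<D>" for K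
      using intervals[OF that] continuous_on_subset[OF cont]
      by (auto intro!: lmeasurable_continuous_image_interval)
    show "\<exists>T. f ` S \<subseteq> T \<and> T \<in> lmeasurable \<and> measure lebesgue T \<le> e"
    proof (intro exI conjI)
      show "f ` S \<subseteq> (\<Union>K\<in>\<D>. f ` K)"
        using cover by blast
      show "(\<Union>K\<in>\<D>. f ` K) \<in> lmeasurable"
        by (rule fmeasurable_UN_bound[OF \<open>countable \<D>\<close> image_lmeasurable image_bound])
      show "measure lebesgue (\<Union>K\<in>\<D>. f ` K) \<le> e"
        by (rule measure_UN_bound[OF \<open>countable \<D>\<close> image_lmeasurable image_bound])
    qed
  qed
qed

lemma first_crossing_time:
  fixes g :: "real \<Rightarrow> real"
  assumes cont: "continuous_on {a..b} g" and "g a < y" "y < g b" "a \<le> b"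
  obtains t where "a < t" "t \<le> b" "g t = y" "\<And>r. a \<le> r \<Longrightarrow> r < t \<Longrightarrow> g r < y"
proof -
  define P where "P = {a..b} \<inter> g -` {y..}"
  have "b \<in> P" "closed P"
    using assms by (auto simp: P_def intro: continuous_closed_preimage)
  moreover have "bdd_below P"
    unfolding P_def by (rule bdd_belowI[of _ a]) auto
  ultimately have "Inf P \<in> P"
    by (intro closed_contains_Inf) auto
  have below: "g r < y" if "a \<le> r" "r < Inf P" for r
  proof -
    have "r \<notin> P"
      using that cInf_lower[OF _ \<open>bdd_below P\<close>, of r] by auto
    then show ?thesis
      using that \<open>Inf P \<in> P\<close> by (auto simp: P_def)
  qed
  have "a < Inf P"
    using \<open>Inf P \<in> P\<close> \<open>g a < y\<close> by (cases "Inf P = a") (auto simp: P_def)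
  obtain r where r: "a \<le> r" "r \<le> Inf P" "g r = y"
    using IVT'[of g a y "Inf P"] \<open>Inf P \<in> P\<close> \<open>g a < y\<close> continuous_on_subset[OF cont]
    by (auto simp: P_def)
  moreover have "\<not> r < Inf P"
  proof
    assume "r < Inf P"
    then show False
      using below[of r] r by simp
  qed
  ultimately have "g (Inf P) = y"
    by simp
  then show thesis
    using that \<open>a < Inf P\<close> \<open>Inf P \<in> P\<close> below by (auto simp: P_def)
qed

text \<open>A value strictly between \<open>g a\<close> and \<open>g b\<close> is taken at a first crossing time, where \<open>g\<close>
  cannot be strictly decreasing.\<close>

lemma open_interval_subset_image_exceptional:
  fixes g :: "real \<Rightarrow> real"
  assumes cont: "continuous_on {a..b} g" and "a \<le> b"
    and decreasing: "\<And>t. t \<in> {a<..b} \<Longrightarrow> t \<notin> N \<Longrightarrow> \<exists>D<0. (g has_real_derivative D) (at t)"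
  shows "{g a<..<g b} \<subseteq> g ` (N \<inter> {a..b})"
proof
  fix y assume "y \<in> {g a<..<g b}"
  then obtain t where t: "a < t" "t \<le> b" "g t = y" and below: "\<And>r. a \<le> r \<Longrightarrow> r < t \<Longrightarrow> g r < y"
    using first_crossing_time[OF cont _ _ \<open>a \<le> b\<close>, of y] by auto
  have "t \<in> N"
  proof (rule ccontr)
    assume "t \<notin> N"
    then obtain D where "D < 0" "(g has_real_derivative D) (at t)"
      using decreasing t by auto
    then obtain d where "d > 0" and later_smaller: "\<And>h. 0 < h \<Longrightarrow> h < d \<Longrightarrow> g t < g (t - h)"
      using DERIV_neg_dec_left by blast
    define h where "h = min d (t - a) / 2"
    have "0 < h" "h < d" "a \<le> t - h"
      using \<open>d > 0\<close> \<open>a < t\<close> by (auto simp: h_def min_def field_simps)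
    then show False
      using later_smaller[of h] below[of "t - h"] t(3) by simp
  qed
  then show "y \<in> g ` (N \<inter> {a..b})"
    using t by auto
qed

text \<open>If \<open>f a < f b\<close>, the tilted function \<open>g t = f t - \<epsilon> t\<close> still increases from \<open>a\<close> to \<open>b\<close>
  and is strictly decreasing wherever \<open>f\<close> is differentiable with \<open>f' \<le> 0\<close>, so a nondegenerate
  interval lies in the image of the null set \<open>N\<close> under \<open>g\<close>.\<close>

lemma absolutely_continuous_real_nonincreasing:
  fixes f :: "real \<Rightarrow> real"
  assumes "a \<le> b" and ac: "absolutely_continuous_real f a b" and "negligible N"
    and deriv: "\<And>t. t \<in> {a<..b} \<Longrightarrow> t \<notin> N \<Longrightarrow> \<exists>D\<le>0. (f has_real_derivative D) (at t)"
  shows "f b \<le> f a"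
proof (rule ccontr)
  assume "\<not> f b \<le> f a"
  then have "a < b"
    using \<open>a \<le> b\<close> by (cases "a = b") auto
  define \<epsilon> where "\<epsilon> = (f b - f a) / (2 * (b - a))"
  define g where "g t = f t - \<epsilon> * t" for t
  have "\<epsilon> > 0"
    using \<open>\<not> f b \<le> f a\<close> \<open>a < b\<close> by (simp add: \<epsilon>_def)
  have "\<epsilon> * (b - a) = (f b - f a) / 2"
    using \<open>a < b\<close> by (simp add: \<epsilon>_def field_simps)
  then have "g a < g b"
    using \<open>\<not> f b \<le> f a\<close> by (simp add: g_def algebra_simps)
  have ac_g: "absolutely_continuous_real g a b"
  proof (rule absolutely_continuous_wrt_dominated[OF ac zero_le_one less_imp_le[OF \<open>\<epsilon> > 0\<close>]])
    fix s t :: real assume "s \<le> t"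
    have "\<bar>g t - g s\<bar> = \<bar>(f t - f s) - \<epsilon> * (t - s)\<bar>"
      by (simp add: g_def algebra_simps)
    also have "\<dots> \<le> \<bar>f t - f s\<bar> + \<bar>\<epsilon> * (t - s)\<bar>"
      by (rule abs_triangle_ineq4)
    also have "\<bar>\<epsilon> * (t - s)\<bar> = \<epsilon> * (t - s)"
      using \<open>s \<le> t\<close> \<open>\<epsilon> > 0\<close> by simp
    finally show "\<bar>g t - g s\<bar> \<le> 1 * \<bar>f t - f s\<bar> + \<epsilon> * (t - s)"
      by simp
  qed
  have "{g a<..<g b} \<subseteq> g ` (N \<inter> {a..b})"
  proof (rule open_interval_subset_image_exceptional[OF _ \<open>a \<le> b\<close>])
    show "continuous_on {a..b} g"
      by (rule uniformly_continuous_imp_continuous[OF absolutely_continuous_real_imp_uniformly_continuous[OF ac_g]])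
    show "\<exists>D<0. (g has_real_derivative D) (at t)" if t: "t \<in> {a<..b}" "t \<notin> N" for t
    proof -
      obtain D where "D \<le> 0" "(f has_real_derivative D) (at t)"
        using deriv[OF t] by auto
      then have "(g has_real_derivative D - \<epsilon>) (at t)" "D - \<epsilon> < 0"
        using \<open>\<epsilon> > 0\<close> unfolding g_def by (auto intro!: derivative_eq_intros)
      then show ?thesis
        by blast
    qed
  qed
  moreover have "negligible (g ` (N \<inter> {a..b}))"
    using \<open>negligible N\<close> by (intro negligible_image_absolutely_continuous_real[OF ac_g])
      (auto intro: negligible_subset)
  ultimately have "negligible {g a<..<g b}"
    by (rule negligible_subset[rotated])
  with \<open>g a < g b\<close> show False
    using negligible_interval(2)[of "g a" "g b"] by (simp add: box_real)
qed


section \<open>Square integrable functions\<close>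

lemma abs_mult_le_sum_squares: "\<bar>(a::real) * b\<bar> \<le> a\<^sup>2 + b\<^sup>2"
proof -
  have "0 \<le> (\<bar>a\<bar> - \<bar>b\<bar>)\<^sup>2"
    by simp
  then have "2 * (\<bar>a\<bar> * \<bar>b\<bar>) \<le> a\<^sup>2 + b\<^sup>2"
    by (simp add: power2_diff)
  moreover have "0 \<le> \<bar>a\<bar> * \<bar>b\<bar>"
    by simp
  ultimately show ?thesis
    unfolding abs_mult by linarith
qed

lemma integrable_mult_memL2:
  assumes "memL2 \<nu> f" "memL2 \<nu> g"
  shows "integrable \<nu> (\<lambda>x. f x * g x)"
proof (rule Bochner_Integration.integrable_bound)
  show "integrable \<nu> (\<lambda>x. (f x)\<^sup>2 + (g x)\<^sup>2)"
    using assms by (auto simp: memL2_def)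
  show "(\<lambda>x. f x * g x) \<in> borel_measurable \<nu>"
    using assms by (auto simp: memL2_def)
  show "AE x in \<nu>. norm (f x * g x) \<le> norm ((f x)\<^sup>2 + (g x)\<^sup>2)"
    by (intro AE_I2) (simp add: abs_mult_le_sum_squares)
qed

lemma memL2_add:
  assumes "memL2 \<nu> f" "memL2 \<nu> g"
  shows "memL2 \<nu> (\<lambda>x. f x + g x)"
proof -
  have "(\<lambda>x. (f x + g x)\<^sup>2) = (\<lambda>x. (f x)\<^sup>2 + 2 * (f x * g x) + (g x)\<^sup>2)"
    by (simp add: power2_sum algebra_simps)
  moreover have "integrable \<nu> (\<lambda>x. (f x)\<^sup>2 + 2 * (f x * g x) + (g x)\<^sup>2)"
    using assms integrable_mult_memL2[OF assms] by (auto simp: memL2_def)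
  ultimately show ?thesis
    using assms by (auto simp: memL2_def)
qed

lemma memL2_cmult: "memL2 \<nu> f \<Longrightarrow> memL2 \<nu> (\<lambda>x. c * f x)"
  by (simp add: memL2_def power_mult_distrib borel_measurable_times)

lemma memL2_uminus: "memL2 \<nu> f \<Longrightarrow> memL2 \<nu> (\<lambda>x. - f x)"
  by (simp add: memL2_def)

lemma memL2_diff: "memL2 \<nu> f \<Longrightarrow> memL2 \<nu> g \<Longrightarrow> memL2 \<nu> (\<lambda>x. f x - g x)"
  using memL2_add[of \<nu> f "\<lambda>x. - g x"] memL2_uminus[of \<nu> g] by simp

lemma memL2_zero: "memL2 \<nu> (\<lambda>x. 0)"
  by (simp add: memL2_def)

lemma (in finite_measure) memL2_const: "memL2 M (\<lambda>x. c)"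
  by (simp add: memL2_def)

lemma (in finite_measure) memL2_bounded:
  assumes "f \<in> borel_measurable M" "\<And>x. x \<in> space M \<Longrightarrow> \<bar>f x\<bar> \<le> C"
  shows "memL2 M f"
  unfolding memL2_def
proof
  show "integrable M (\<lambda>x. (f x)\<^sup>2)"
  proof (rule Bochner_Integration.integrable_bound)
    show "integrable M (\<lambda>x. C\<^sup>2)"
      by simp
    show "AE x in M. norm ((f x)\<^sup>2) \<le> norm (C\<^sup>2)"
    proof (rule AE_I2)
      fix x assume "x \<in> space M"
      then have "\<bar>f x\<bar>\<^sup>2 \<le> C\<^sup>2"
        using assms(2) by (intro power_mono) auto
      then show "norm ((f x)\<^sup>2) \<le> norm (C\<^sup>2)"
        by simp
    qed
  qed (use assms(1) in simp)
qed fact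

lemma (in finite_measure) integrable_memL2:
  assumes "memL2 M f"
  shows "integrable M f"
proof (rule Bochner_Integration.integrable_bound)
  show "integrable M (\<lambda>x. (f x)\<^sup>2 + 1)"
    using assms by (simp add: memL2_def)
  show "AE x in M. norm (f x) \<le> norm ((f x)\<^sup>2 + 1)"
    using abs_mult_le_sum_squares[of _ 1] by (intro AE_I2) simp
qed (use assms in \<open>simp add: memL2_def\<close>)

lemma l2norm_nonneg: "l2norm \<nu> f \<ge> 0"
  by (simp add: l2norm_def)

lemma l2norm_power2: "(l2norm \<nu> f)\<^sup>2 = (\<integral>x. (f x)\<^sup>2 \<partial>\<nu>)"
  by (simp add: l2norm_def)

lemma l2norm_cmult: "l2norm \<nu> (\<lambda>x. c * f x) = \<bar>c\<bar> * l2norm \<nu> f"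
  by (simp add: l2norm_def power_mult_distrib real_sqrt_mult)

lemma l2norm_minus_commute: "l2norm \<nu> (\<lambda>x. f x - g x) = l2norm \<nu> (\<lambda>x. g x - f x)"
  by (simp add: l2norm_def power2_commute)

lemma quadratic_nonneg_imp_discriminant_le:
  fixes A B C :: real
  assumes "\<And>x. 0 \<le> A * x\<^sup>2 - 2 * B * x + C" "A \<ge> 0"
  shows "B\<^sup>2 \<le> A * C"
proof (cases "A = 0")
  case True
  with assms(1)[of "(C + 1) / (2 * B)"] show ?thesis
    by (cases "B = 0") (simp_all add: field_simps)
next
  case False
  with assms(2) have "A > 0" by simp
  with assms(1)[of "B / A"] show ?thesis
    by (simp add: field_simps power2_eq_square)
qed

lemma cauchy_schwarz_L2:
  assumes "memL2 \<nu> f" "memL2 \<nu> g"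
  shows "\<bar>\<integral>x. f x * g x \<partial>\<nu>\<bar> \<le> l2norm \<nu> f * l2norm \<nu> g"
proof -
  have ff: "integrable \<nu> (\<lambda>x. (f x)\<^sup>2)" and gg: "integrable \<nu> (\<lambda>x. (g x)\<^sup>2)"
    using assms by (auto simp: memL2_def)
  have fg: "integrable \<nu> (\<lambda>x. f x * g x)"
    by (rule integrable_mult_memL2[OF assms])
  have "0 \<le> (l2norm \<nu> f)\<^sup>2 * s\<^sup>2 - 2 * (\<integral>x. f x * g x \<partial>\<nu>) * s + (l2norm \<nu> g)\<^sup>2" for s
  proof -
    have "0 \<le> (\<integral>x. (s * f x - g x)\<^sup>2 \<partial>\<nu>)"
      by simp
    also have "\<dots> = (\<integral>x. s\<^sup>2 * (f x)\<^sup>2 - 2 * s * (f x * g x) + (g x)\<^sup>2 \<partial>\<nu>)"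
      by (rule Bochner_Integration.integral_cong) (simp_all add: power2_eq_square algebra_simps)
    also have "\<dots> = (l2norm \<nu> f)\<^sup>2 * s\<^sup>2 - 2 * (\<integral>x. f x * g x \<partial>\<nu>) * s + (l2norm \<nu> g)\<^sup>2"
      using ff gg fg by (simp add: l2norm_power2)
    finally show ?thesis .
  qed
  then have "(\<integral>x. f x * g x \<partial>\<nu>)\<^sup>2 \<le> (l2norm \<nu> f * l2norm \<nu> g)\<^sup>2"
    unfolding power_mult_distrib by (rule quadratic_nonneg_imp_discriminant_le) simp
  then have "\<bar>\<integral>x. f x * g x \<partial>\<nu>\<bar>\<^sup>2 \<le> (l2norm \<nu> f * l2norm \<nu> g)\<^sup>2"
    by simp
  then show ?thesis
    by (rule power2_le_imp_le) (simp add: l2norm_nonneg)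
qed

lemma l2norm_add_power2:
  assumes "memL2 \<nu> f" "memL2 \<nu> g"
  shows "(l2norm \<nu> (\<lambda>x. f x + g x))\<^sup>2 = (l2norm \<nu> f)\<^sup>2 + 2 * (\<integral>x. f x * g x \<partial>\<nu>) + (l2norm \<nu> g)\<^sup>2"
proof -
  have "(l2norm \<nu> (\<lambda>x. f x + g x))\<^sup>2 = (\<integral>x. (f x)\<^sup>2 + 2 * (f x * g x) + (g x)\<^sup>2 \<partial>\<nu>)"
    unfolding l2norm_power2
    by (rule Bochner_Integration.integral_cong) (simp_all add: power2_sum algebra_simps)
  also have "\<dots> = (l2norm \<nu> f)\<^sup>2 + 2 * (\<integral>x. f x * g x \<partial>\<nu>) + (l2norm \<nu> g)\<^sup>2"
    using assms integrable_mult_memL2[OF assms] by (simp add: memL2_def l2norm_power2)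
  finally show ?thesis .
qed

lemma l2norm_triangle:
  assumes "memL2 \<nu> f" "memL2 \<nu> g"
  shows "l2norm \<nu> (\<lambda>x. f x + g x) \<le> l2norm \<nu> f + l2norm \<nu> g"
proof -
  have "(l2norm \<nu> (\<lambda>x. f x + g x))\<^sup>2 \<le> (l2norm \<nu> f + l2norm \<nu> g)\<^sup>2"
    using l2norm_add_power2[OF assms] cauchy_schwarz_L2[OF assms]
    by (simp add: power2_sum)
  then show ?thesis
    by (rule power2_le_imp_le) (simp add: l2norm_nonneg)
qed

lemma l2norm_diff_triangle:
  assumes "memL2 \<nu> f" "memL2 \<nu> g"
  shows "\<bar>l2norm \<nu> f - l2norm \<nu> g\<bar> \<le> l2norm \<nu> (\<lambda>x. f x - g x)"
  using l2norm_triangle[OF assms(2) memL2_diff[OF assms]]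
    l2norm_triangle[OF assms(1) memL2_diff[OF assms(2,1)]] l2norm_minus_commute[of \<nu> g f]
  by (simp add: abs_le_iff)

lemma abs_l2norm_power2_diff_le:
  assumes "memL2 \<nu> f" "memL2 \<nu> g"
  shows "\<bar>(l2norm \<nu> f)\<^sup>2 - (l2norm \<nu> g)\<^sup>2\<bar> \<le> l2norm \<nu> (\<lambda>x. f x - g x) * (l2norm \<nu> f + l2norm \<nu> g)"
proof -
  have "(l2norm \<nu> f)\<^sup>2 - (l2norm \<nu> g)\<^sup>2 = (l2norm \<nu> f - l2norm \<nu> g) * (l2norm \<nu> f + l2norm \<nu> g)"
    by (simp add: power2_eq_square algebra_simps)
  also have "\<bar>\<dots>\<bar> \<le> l2norm \<nu> (\<lambda>x. f x - g x) * (l2norm \<nu> f + l2norm \<nu> g)"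
    unfolding abs_mult using l2norm_diff_triangle[OF assms] l2norm_nonneg[of \<nu> f] l2norm_nonneg[of \<nu> g]
    by (simp add: mult_right_mono)
  finally show ?thesis .
qed

lemma (in finite_measure) integral_abs_le_l2norm:
  assumes "memL2 M f"
  shows "(\<integral>x. \<bar>f x\<bar> \<partial>M) \<le> sqrt (measure M (space M)) * l2norm M f"
proof -
  have "memL2 M (\<lambda>x. \<bar>f x\<bar>)"
    using assms by (simp add: memL2_def borel_measurable_abs)
  from cauchy_schwarz_L2[OF this memL2_const, of 1]
  have "\<bar>\<integral>x. \<bar>f x\<bar> \<partial>M\<bar> \<le> l2norm M (\<lambda>x. \<bar>f x\<bar>) * l2norm M (\<lambda>x. 1)"
    by simp
  moreover have "l2norm M (\<lambda>x. 1) = sqrt (measure M (space M))"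
    by (simp add: l2norm_def)
  moreover have "l2norm M (\<lambda>x. \<bar>f x\<bar>) = l2norm M f"
    by (simp add: l2norm_def)
  ultimately show ?thesis
    by (simp add: mult.commute)
qed

lemma (in finite_measure) abs_integral_le_l2norm:
  "memL2 M f \<Longrightarrow> \<bar>\<integral>x. f x \<partial>M\<bar> \<le> sqrt (measure M (space M)) * l2norm M f"
  using integral_abs_bound[of M f] integral_abs_le_l2norm[of f] by linarith

lemma (in finite_measure) abs_integral_diff_le_l2norm:
  assumes "memL2 M f" "memL2 M g"
  shows "\<bar>(\<integral>x. g x \<partial>M) - (\<integral>x. f x \<partial>M)\<bar> \<le> sqrt (measure M (space M)) * l2norm M (\<lambda>x. g x - f x)"
  using abs_integral_le_l2norm[OF memL2_diff[OF assms(2,1)]] integrable_memL2[OF assms(1)]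
    integrable_memL2[OF assms(2)]
  by simp

lemma (in finite_measure) integral_expansion:
  assumes "memL2 M f" "memL2 M g" "memL2 M d"
  shows "\<bar>(\<integral>x. g x \<partial>M) - (\<integral>x. f x \<partial>M) - h * (\<integral>x. d x \<partial>M)\<bar>
    \<le> sqrt (measure M (space M)) * l2norm M (\<lambda>x. g x - f x - h * d x)"
  using abs_integral_diff_le_l2norm[OF memL2_add[OF assms(1) memL2_cmult[OF assms(3)]] assms(2), of h]
    integrable_memL2[OF assms(1)] integrable_memL2[OF assms(3)]
  by (simp add: algebra_simps)

lemma l2norm_power2_expansion:
  assumes "memL2 \<nu> f" "memL2 \<nu> g" "memL2 \<nu> d"
  shows "\<bar>(l2norm \<nu> g)\<^sup>2 / 2 - (l2norm \<nu> f)\<^sup>2 / 2 - h * (\<integral>x. f x * d x \<partial>\<nu>)\<bar>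
    \<le> l2norm \<nu> f * l2norm \<nu> (\<lambda>x. g x - f x - h * d x) + 1 / 2 * (l2norm \<nu> (\<lambda>x. g x - f x))\<^sup>2"
proof -
  define k where "k x = g x - f x" for x
  define e where "e x = g x - f x - h * d x" for x
  have k: "memL2 \<nu> k" and e: "memL2 \<nu> e"
    unfolding k_def e_def using assms by (auto intro: memL2_diff memL2_cmult)
  have "(l2norm \<nu> g)\<^sup>2 = (l2norm \<nu> (\<lambda>x. f x + k x))\<^sup>2"
    by (simp add: k_def)
  also have "\<dots> = (l2norm \<nu> f)\<^sup>2 + 2 * (\<integral>x. f x * k x \<partial>\<nu>) + (l2norm \<nu> k)\<^sup>2"
    by (rule l2norm_add_power2[OF assms(1) k])
  finally have g: "(l2norm \<nu> g)\<^sup>2 = (l2norm \<nu> f)\<^sup>2 + 2 * (\<integral>x. f x * k x \<partial>\<nu>) + (l2norm \<nu> k)\<^sup>2" .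
  have "(\<integral>x. f x * k x \<partial>\<nu>) - h * (\<integral>x. f x * d x \<partial>\<nu>) = (\<integral>x. f x * k x - h * (f x * d x) \<partial>\<nu>)"
    using integrable_mult_memL2[OF assms(1) k] integrable_mult_memL2[OF assms(1,3)] by simp
  also have "\<dots> = (\<integral>x. f x * e x \<partial>\<nu>)"
    by (rule Bochner_Integration.integral_cong) (simp_all add: k_def e_def algebra_simps)
  finally have eq: "(l2norm \<nu> g)\<^sup>2 / 2 - (l2norm \<nu> f)\<^sup>2 / 2 - h * (\<integral>x. f x * d x \<partial>\<nu>)
      = (\<integral>x. f x * e x \<partial>\<nu>) + (l2norm \<nu> k)\<^sup>2 / 2"
    unfolding g by (simp add: field_simps)
  have "\<bar>(\<integral>x. f x * e x \<partial>\<nu>) + (l2norm \<nu> k)\<^sup>2 / 2\<bar> \<le> \<bar>\<integral>x. f x * e x \<partial>\<nu>\<bar> + (l2norm \<nu> k)\<^sup>2 / 2"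
    by (rule order_trans[OF abs_triangle_ineq]) simp
  also have "\<dots> \<le> l2norm \<nu> f * l2norm \<nu> e + 1 / 2 * (l2norm \<nu> k)\<^sup>2"
    using cauchy_schwarz_L2[OF assms(1) e] by simp
  finally show ?thesis
    unfolding eq by (simp only: e_def[abs_def] k_def[abs_def])
qed

section \<open>The Huber regularization of the absolute value\<close>

definition huber :: "real \<Rightarrow> real \<Rightarrow> real" where
  "huber \<delta> y = (if \<bar>y\<bar> \<le> \<delta> then y\<^sup>2 / (2 * \<delta>) else \<bar>y\<bar> - \<delta> / 2)"

definition huber_deriv :: "real \<Rightarrow> real \<Rightarrow> real" where
  "huber_deriv \<delta> y = (if \<bar>y\<bar> \<le> \<delta> then y / \<delta> else sgn y)"

lemma huber_measurable [measurable]: "huber \<delta> \<in> borel_measurable borel"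
  unfolding huber_def[abs_def] by measurable

lemma huber_deriv_measurable [measurable]: "huber_deriv \<delta> \<in> borel_measurable borel"
  unfolding huber_deriv_def[abs_def] by measurable

lemma abs_huber_deriv_le: "\<delta> > 0 \<Longrightarrow> \<bar>huber_deriv \<delta> y\<bar> \<le> 1"
  by (auto simp: huber_deriv_def abs_sgn_eq)

lemma huber_minus: "huber \<delta> (- y) = huber \<delta> y"
  by (simp add: huber_def)

lemma huber_deriv_minus: "huber_deriv \<delta> (- y) = - huber_deriv \<delta> y"
  by (simp add: huber_deriv_def)

lemma huber_abs_bounds:
  assumes "\<delta> > 0"
  shows "0 \<le> huber \<delta> y" "huber \<delta> y \<le> \<bar>y\<bar>" "\<bar>y\<bar> \<le> huber \<delta> y + \<delta> / 2"
proof -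
  show "0 \<le> huber \<delta> y"
    using assms by (simp add: huber_def)
  have "huber \<delta> y \<le> \<bar>y\<bar> \<and> \<bar>y\<bar> \<le> huber \<delta> y + \<delta> / 2"
  proof (cases "\<bar>y\<bar> \<le> \<delta>")
    case True
    have "y\<^sup>2 = \<bar>y\<bar> * \<bar>y\<bar>"
      by (simp add: power2_eq_square abs_mult_self_eq)
    also have "\<dots> \<le> \<bar>y\<bar> * (2 * \<delta>)"
      using True assms by (intro mult_left_mono) auto
    finally have "huber \<delta> y \<le> \<bar>y\<bar>"
      using True assms by (simp add: huber_def pos_divide_le_eq)
    moreover have "0 \<le> (\<bar>y\<bar> - \<delta>)\<^sup>2"
      by simp
    then have "\<bar>y\<bar> \<le> huber \<delta> y + \<delta> / 2"
      using True assms by (simp add: huber_def field_simps power2_eq_square)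
    ultimately show ?thesis ..
  next
    case False
    then show ?thesis
      using assms by (simp add: huber_def)
  qed
  then show "huber \<delta> y \<le> \<bar>y\<bar>" "\<bar>y\<bar> \<le> huber \<delta> y + \<delta> / 2"
    by auto
qed

lemma huber_taylor_bounds_nonneg:
  fixes \<delta> y z :: real
  assumes "\<delta> > 0" "y \<ge> 0"
  defines "R \<equiv> huber \<delta> z - huber \<delta> y - huber_deriv \<delta> y * (z - y)"
  shows "0 \<le> R \<and> 2 * \<delta> * R \<le> (z - y)\<^sup>2"
proof -
  have R_nonneg: "0 \<le> R" if "0 \<le> 2 * \<delta> * R"
    using that \<open>\<delta> > 0\<close> by (simp add: zero_le_mult_iff)
  consider "y \<le> \<delta>" "\<bar>z\<bar> \<le> \<delta>" | "y \<le> \<delta>" "z > \<delta>" | "y \<le> \<delta>" "z < - \<delta>"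
    | "y > \<delta>" "\<bar>z\<bar> \<le> \<delta>" | "y > \<delta>" "z > \<delta>" | "y > \<delta>" "z < - \<delta>"
    by linarith
  then show ?thesis
  proof cases
    case 1
    then have "2 * \<delta> * R = (z - y)\<^sup>2"
      using assms by (simp add: R_def huber_def huber_deriv_def field_simps power2_eq_square)
    then show ?thesis
      using R_nonneg by simp
  next
    case 2
    then have "2 * \<delta> * R = (z - y)\<^sup>2 - (z - \<delta>)\<^sup>2"
      using assms by (simp add: R_def huber_def huber_deriv_def field_simps power2_eq_square)
    moreover have "(z - \<delta>)\<^sup>2 \<le> (z - y)\<^sup>2"
      using 2 by (subst abs_le_square_iff[symmetric]) auto
    ultimately show ?thesis
      using R_nonneg by simp
  next
    case 3
    then have "2 * \<delta> * R = (z - y)\<^sup>2 - (z + \<delta>)\<^sup>2"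
      using assms by (simp add: R_def huber_def huber_deriv_def field_simps power2_eq_square)
    moreover have "(z + \<delta>)\<^sup>2 \<le> (z - y)\<^sup>2"
      using 3 assms by (subst abs_le_square_iff[symmetric]) auto
    ultimately show ?thesis
      using R_nonneg by simp
  next
    case 4
    then have "2 * \<delta> * R = (z - \<delta>)\<^sup>2"
      using assms by (simp add: R_def huber_def huber_deriv_def field_simps power2_eq_square)
    moreover have "(z - \<delta>)\<^sup>2 \<le> (z - y)\<^sup>2"
      using 4 by (subst abs_le_square_iff[symmetric]) auto
    ultimately show ?thesis
      using R_nonneg by simp
  next
    case 5
    then have "R = 0"
      using assms by (simp add: R_def huber_def huber_deriv_def)
    then show ?thesis
      by simp
  next
    case 6
    then have "R = - 2 * z"
      using assms by (simp add: R_def huber_def huber_deriv_def)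
    moreover have "(z - \<delta>)\<^sup>2 \<le> (z - y)\<^sup>2"
      using 6 assms by (subst abs_le_square_iff[symmetric]) auto
    moreover have "(z - \<delta>)\<^sup>2 = (z + \<delta>)\<^sup>2 - 4 * \<delta> * z"
      by (simp add: power2_eq_square algebra_simps)
    ultimately have "- 4 * \<delta> * z \<le> (z - y)\<^sup>2"
      using zero_le_power2[of "z + \<delta>"] by linarith
    with \<open>R = - 2 * z\<close> show ?thesis
      using 6 \<open>\<delta> > 0\<close> by (simp add: algebra_simps)
  qed
qed

lemma huber_taylor_bounds:
  assumes "\<delta> > 0"
  shows "0 \<le> huber \<delta> z - huber \<delta> y - huber_deriv \<delta> y * (z - y)"
    and "2 * \<delta> * (huber \<delta> z - huber \<delta> y - huber_deriv \<delta> y * (z - y)) \<le> (z - y)\<^sup>2"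
proof -
  have "0 \<le> huber \<delta> z - huber \<delta> y - huber_deriv \<delta> y * (z - y) \<and>
      2 * \<delta> * (huber \<delta> z - huber \<delta> y - huber_deriv \<delta> y * (z - y)) \<le> (z - y)\<^sup>2"
  proof (cases "y \<ge> 0")
    case True
    then show ?thesis
      using huber_taylor_bounds_nonneg[OF assms] by simp
  next
    case False
    then show ?thesis
      using huber_taylor_bounds_nonneg[OF assms, of "- y" "- z"]
      by (simp add: huber_minus huber_deriv_minus power2_commute algebra_simps)
  qed
  then show "0 \<le> huber \<delta> z - huber \<delta> y - huber_deriv \<delta> y * (z - y)"
    and "2 * \<delta> * (huber \<delta> z - huber \<delta> y - huber_deriv \<delta> y * (z - y)) \<le> (z - y)\<^sup>2"
    by auto
qed

lemma huber_lipschitz: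
  assumes "\<delta> > 0"
  shows "\<bar>huber \<delta> a - huber \<delta> b\<bar> \<le> \<bar>a - b\<bar>"
proof -
  have "\<bar>huber_deriv \<delta> b * (a - b)\<bar> \<le> \<bar>a - b\<bar>" "\<bar>huber_deriv \<delta> a * (b - a)\<bar> \<le> \<bar>a - b\<bar>"
    using abs_huber_deriv_le[OF assms, of a] abs_huber_deriv_le[OF assms, of b]
    by (simp_all add: abs_mult abs_minus_commute mult_left_le_one_le)
  then show ?thesis
    using huber_taylor_bounds(1)[OF assms, of a b] huber_taylor_bounds(1)[OF assms, of b a]
    by (simp add: abs_le_iff)
qed

text \<open>The map \<open>y \<mapsto> y - \<delta> huber_deriv \<delta> y\<close> is soft thresholding at level \<open>\<delta>\<close>.\<close>

lemma soft_threshold_lipschitz: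
  assumes "\<delta> > 0"
  shows "\<bar>(a - \<delta> * huber_deriv \<delta> a) - (b - \<delta> * huber_deriv \<delta> b)\<bar> \<le> \<bar>a - b\<bar>"
proof -
  have "y - \<delta> * huber_deriv \<delta> y = (if \<bar>y\<bar> \<le> \<delta> then 0 else if y > \<delta> then y - \<delta> else y + \<delta>)" for y
    using assms by (auto simp: huber_deriv_def sgn_if)
  then show ?thesis
    using assms by (auto simp: abs_if)
qed

lemma (in finite_measure) memL2_huber_deriv:
  assumes "u \<in> borel_measurable M" "\<delta> > 0"
  shows "memL2 M (\<lambda>x. huber_deriv \<delta> (u x - c))"
proof (rule memL2_bounded)
  show "(\<lambda>x. huber_deriv \<delta> (u x - c)) \<in> borel_measurable M"
    using measurable_compose[OF borel_measurable_diff[OF assms(1) borel_measurable_const] huber_deriv_measurable]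
    by simp
qed (rule abs_huber_deriv_le[OF assms(2)])

lemma (in finite_measure) integrable_huber:
  assumes "memL2 M f" "\<delta> > 0"
  shows "integrable M (\<lambda>x. huber \<delta> (f x - c))"
proof (rule Bochner_Integration.integrable_bound)
  show "integrable M (\<lambda>x. \<bar>f x - c\<bar>)"
    using integrable_memL2[OF memL2_diff[OF assms(1) memL2_const]] by simp
  show "AE x in M. norm (huber \<delta> (f x - c)) \<le> norm \<bar>f x - c\<bar>"
    using huber_abs_bounds[OF assms(2)] by simp
  have "f \<in> borel_measurable M"
    using assms(1) by (simp add: memL2_def)
  from measurable_compose[OF borel_measurable_diff[OF this borel_measurable_const] huber_measurable]
  show "(\<lambda>x. huber \<delta> (f x - c)) \<in> borel_measurable M"
    by simp
qed

lemma (in finite_measure) abs_huber_integral_diff_le: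
  assumes "memL2 M f" "memL2 M g" "\<delta> > 0"
  shows "\<bar>(\<integral>x. huber \<delta> (g x - c) \<partial>M) - (\<integral>x. huber \<delta> (f x - c) \<partial>M)\<bar>
    \<le> sqrt (measure M (space M)) * l2norm M (\<lambda>x. g x - f x)"
proof -
  have "\<bar>(\<integral>x. huber \<delta> (g x - c) \<partial>M) - (\<integral>x. huber \<delta> (f x - c) \<partial>M)\<bar>
      = \<bar>\<integral>x. huber \<delta> (g x - c) - huber \<delta> (f x - c) \<partial>M\<bar>"
    using integrable_huber[OF assms(1,3)] integrable_huber[OF assms(2,3)] by simp
  also have "\<dots> \<le> (\<integral>x. \<bar>huber \<delta> (g x - c) - huber \<delta> (f x - c)\<bar> \<partial>M)"
    by (rule integral_abs_bound)
  also have "\<dots> \<le> (\<integral>x. \<bar>g x - f x\<bar> \<partial>M)"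
  proof (rule integral_mono)
    show "integrable M (\<lambda>x. \<bar>huber \<delta> (g x - c) - huber \<delta> (f x - c)\<bar>)"
      using integrable_huber[OF assms(1,3)] integrable_huber[OF assms(2,3)] by simp
    show "integrable M (\<lambda>x. \<bar>g x - f x\<bar>)"
      using integrable_memL2[OF memL2_diff[OF assms(2,1)]] by simp
    show "\<bar>huber \<delta> (g x - c) - huber \<delta> (f x - c)\<bar> \<le> \<bar>g x - f x\<bar>" for x
      using huber_lipschitz[OF assms(3), of "g x - c" "f x - c"] by simp
  qed
  also have "\<dots> \<le> sqrt (measure M (space M)) * l2norm M (\<lambda>x. g x - f x)"
    by (rule integral_abs_le_l2norm[OF memL2_diff[OF assms(2,1)]])
  finally show ?thesis .
qed

lemma abs_huber_linearization_le:
  assumes "\<delta> > 0"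
  shows "\<bar>huber \<delta> z - huber \<delta> y - huber_deriv \<delta> y * w\<bar> \<le> \<bar>z - y - w\<bar> + (z - y)\<^sup>2 / \<delta>"
proof -
  define R where "R = huber \<delta> z - huber \<delta> y - huber_deriv \<delta> y * (z - y)"
  have "0 \<le> R" "2 * \<delta> * R \<le> (z - y)\<^sup>2"
    using huber_taylor_bounds[OF assms, of z y] by (simp_all add: R_def)
  moreover have "0 \<le> \<delta> * R"
    using \<open>0 \<le> R\<close> assms by simp
  ultimately have "\<delta> * R \<le> (z - y)\<^sup>2"
    by linarith
  then have "\<bar>R\<bar> \<le> (z - y)\<^sup>2 / \<delta>"
    using \<open>0 \<le> R\<close> assms by (simp add: pos_le_divide_eq mult.commute)
  moreover have "\<bar>huber_deriv \<delta> y * (z - y - w)\<bar> \<le> \<bar>z - y - w\<bar>"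
    using abs_huber_deriv_le[OF assms, of y] by (simp add: abs_mult mult_left_le_one_le)
  moreover have "huber \<delta> z - huber \<delta> y - huber_deriv \<delta> y * w = R + huber_deriv \<delta> y * (z - y - w)"
    by (simp add: R_def algebra_simps)
  ultimately show ?thesis
    by linarith
qed

lemma (in finite_measure) huber_integral_expansion:
  assumes "memL2 M f" "memL2 M g" "memL2 M d" "\<delta> > 0"
  shows "\<bar>(\<integral>x. huber \<delta> (g x - c) \<partial>M) - (\<integral>x. huber \<delta> (f x - c) \<partial>M)
      - h * (\<integral>x. huber_deriv \<delta> (f x - c) * d x \<partial>M)\<bar>
    \<le> sqrt (measure M (space M)) * l2norm M (\<lambda>x. g x - f x - h * d x)
      + 1 / \<delta> * (l2norm M (\<lambda>x. g x - f x))\<^sup>2"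
proof -
  define R where "R x = huber \<delta> (g x - c) - huber \<delta> (f x - c) - huber_deriv \<delta> (f x - c) * (h * d x)" for x
  have e: "memL2 M (\<lambda>x. g x - f x - h * d x)" and k: "memL2 M (\<lambda>x. g x - f x)"
    using assms by (auto intro: memL2_diff memL2_cmult)
  have hd: "memL2 M (\<lambda>x. huber_deriv \<delta> (f x - c))"
    using assms(1,4) by (intro memL2_huber_deriv) (simp_all add: memL2_def)
  have "(\<integral>x. huber \<delta> (g x - c) \<partial>M) - (\<integral>x. huber \<delta> (f x - c) \<partial>M)
      - h * (\<integral>x. huber_deriv \<delta> (f x - c) * d x \<partial>M) = (\<integral>x. R x \<partial>M)"
    using integrable_huber[OF assms(1,4)] integrable_huber[OF assms(2,4)]
      integrable_mult_memL2[OF hd assms(3)] by (simp add: R_def algebra_simps)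
  also have "\<bar>\<integral>x. R x \<partial>M\<bar> \<le> (\<integral>x. \<bar>R x\<bar> \<partial>M)"
    by (rule integral_abs_bound)
  also have "\<dots> \<le> (\<integral>x. \<bar>g x - f x - h * d x\<bar> + (g x - f x)\<^sup>2 / \<delta> \<partial>M)"
  proof (rule integral_mono)
    show "integrable M (\<lambda>x. \<bar>R x\<bar>)"
      using integrable_huber[OF assms(1,4)] integrable_huber[OF assms(2,4)]
        integrable_mult_memL2[OF hd memL2_cmult[OF assms(3), of h]] by (simp add: R_def)
    show "integrable M (\<lambda>x. \<bar>g x - f x - h * d x\<bar> + (g x - f x)\<^sup>2 / \<delta>)"
      using integrable_memL2[OF e] k by (simp add: memL2_def)
    show "\<bar>R x\<bar> \<le> \<bar>g x - f x - h * d x\<bar> + (g x - f x)\<^sup>2 / \<delta>" for x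
      using abs_huber_linearization_le[OF assms(4), of "g x - c" "f x - c" "h * d x"] by (simp add: R_def)
  qed
  also have "\<dots> = (\<integral>x. \<bar>g x - f x - h * d x\<bar> \<partial>M) + 1 / \<delta> * (l2norm M (\<lambda>x. g x - f x))\<^sup>2"
    using integrable_memL2[OF e] k by (simp add: memL2_def l2norm_power2)
  also have "\<dots> \<le> sqrt (measure M (space M)) * l2norm M (\<lambda>x. g x - f x - h * d x)
      + 1 / \<delta> * (l2norm M (\<lambda>x. g x - f x))\<^sup>2"
    using integral_abs_le_l2norm[OF e] by simp
  finally show ?thesis .
qed

section \<open>The total variation functional and its subdifferential\<close>

lemma F1_nonneg: "0 \<le> F1 m \<nu> u"
  by (simp add: F1_def)

lemma F1_zero: "F1 m \<nu> (\<lambda>x. 0) = 0"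
  by (simp add: F1_def zero_ennreal.rep_eq)

lemma F1_add_const: "F1 m \<nu> (\<lambda>x. u x + c) = F1 m \<nu> u"
  by (simp add: F1_def)

lemma F1_mono:
  assumes "\<And>x y. \<bar>v y - v x\<bar> \<le> \<bar>u y - u x\<bar>"
  shows "F1 m \<nu> v \<le> F1 m \<nu> u"
proof -
  have "(\<integral>\<^sup>+ x. (\<integral>\<^sup>+ y. ennreal \<bar>v y - v x\<bar> \<partial>(m x)) \<partial>\<nu>) \<le> (\<integral>\<^sup>+ x. (\<integral>\<^sup>+ y. ennreal \<bar>u y - u x\<bar> \<partial>(m x)) \<partial>\<nu>)"
    by (intro nn_integral_mono ennreal_leI assms)
  then show ?thesis
    unfolding F1_def by (simp add: mult_left_mono flip: less_eq_ennreal.rep_eq)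
qed

lemma subdiff_F1_test:
  assumes sd: "subdiff_L2 \<nu> (F1 m \<nu>) u g" and "memL2 \<nu> w" and "F1 m \<nu> w \<le> F1 m \<nu> u"
  shows "(\<integral>x. g x * (w x - u x) \<partial>\<nu>) \<le> 0"
proof -
  have "F1 m \<nu> u + ereal (\<integral>x. g x * (w x - u x) \<partial>\<nu>) \<le> F1 m \<nu> w"
    using sd assms(2) by (simp add: subdiff_L2_def)
  also have "\<dots> \<le> F1 m \<nu> u"
    by fact
  finally have "F1 m \<nu> u + ereal (\<integral>x. g x * (w x - u x) \<partial>\<nu>) \<le> F1 m \<nu> u" .
  moreover have "\<bar>F1 m \<nu> u\<bar> \<noteq> \<infinity>"
    using sd F1_nonneg[of m \<nu> u] by (auto simp: subdiff_L2_def)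
  ultimately show ?thesis
    by (cases "F1 m \<nu> u") auto
qed

lemma subdiff_F1_le_pairing:
  assumes sd: "subdiff_L2 \<nu> (F1 m \<nu>) u g"
  shows "F1 m \<nu> u \<le> ereal (\<integral>x. g x * u x \<partial>\<nu>)"
proof -
  have "F1 m \<nu> u + ereal (\<integral>x. g x * (0 - u x) \<partial>\<nu>) \<le> F1 m \<nu> (\<lambda>x. 0)"
    using sd memL2_zero[of \<nu>] unfolding subdiff_L2_def by blast
  then have "F1 m \<nu> u + ereal (\<integral>x. g x * (0 - u x) \<partial>\<nu>) \<le> 0"
    by (simp add: F1_zero)
  moreover have "\<bar>F1 m \<nu> u\<bar> \<noteq> \<infinity>"
    using sd F1_nonneg[of m \<nu> u] by (auto simp: subdiff_L2_def)
  ultimately show ?thesis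
    by (cases "F1 m \<nu> u") auto
qed

lemma (in finite_measure) subdiff_F1_integral_eq_0:
  assumes sd: "subdiff_L2 M (F1 m M) u g"
  shows "(\<integral>x. g x \<partial>M) = 0"
proof -
  have u: "memL2 M u"
    using sd by (simp add: subdiff_L2_def)
  have "(\<integral>x. g x * ((u x + c) - u x) \<partial>M) \<le> 0" for c
    using subdiff_F1_test[OF sd memL2_add[OF u memL2_const]] by (simp add: F1_add_const)
  from this[of 1] this[of "- 1"] show ?thesis
    by simp
qed

text \<open>Test with \<open>u - \<delta> huber_deriv \<delta> (u - c)\<close>: soft thresholding is a contraction, so this
  does not increase \<open>F1\<close>.\<close>

lemma (in finite_measure) subdiff_F1_huber_pairing_nonneg:
  assumes sd: "subdiff_L2 M (F1 m M) u g" and "\<delta> > 0"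
  shows "0 \<le> (\<integral>x. g x * huber_deriv \<delta> (u x - c) \<partial>M)"
proof -
  have u: "memL2 M u"
    using sd by (simp add: subdiff_L2_def)
  define w where "w x = u x - \<delta> * huber_deriv \<delta> (u x - c)" for x
  have "memL2 M w"
    unfolding w_def using u
    by (intro memL2_diff memL2_cmult memL2_huber_deriv \<open>\<delta> > 0\<close>) (simp_all add: memL2_def)
  moreover have "F1 m M w \<le> F1 m M u"
  proof (rule F1_mono)
    fix x y
    show "\<bar>w y - w x\<bar> \<le> \<bar>u y - u x\<bar>"
      using soft_threshold_lipschitz[OF \<open>\<delta> > 0\<close>, of "u y - c" "u x - c"]
      by (simp add: w_def algebra_simps)
  qed
  ultimately have "(\<integral>x. g x * (w x - u x) \<partial>M) \<le> 0"
    by (rule subdiff_F1_test[OF sd])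
  moreover have "(\<integral>x. g x * (w x - u x) \<partial>M) = (\<integral>x. - \<delta> * (g x * huber_deriv \<delta> (u x - c)) \<partial>M)"
    by (rule Bochner_Integration.integral_cong) (simp_all add: w_def)
  ultimately have "- \<delta> * (\<integral>x. g x * huber_deriv \<delta> (u x - c) \<partial>M) \<le> 0"
    by simp
  then show ?thesis
    using \<open>\<delta> > 0\<close> by (simp add: zero_le_mult_iff)
qed

section \<open>The operator \<open>opA\<close>\<close>

lemma finite_measure_density_bounded:
  assumes "finite_measure M" "f \<in> borel_measurable M" "AE x in M. \<bar>f x\<bar> \<le> C"
  shows "finite_measure (density M (\<lambda>x. ennreal (f x)))"
proof (rule finite_measureI)
  have "emeasure (density M (\<lambda>x. ennreal (f x))) (space M) = (\<integral>\<^sup>+ x\<in>space M. ennreal (f x) \<partial>M)"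
    using assms(2) by (simp add: emeasure_density)
  also have "\<dots> \<le> (\<integral>\<^sup>+ x. ennreal C \<partial>M)"
    using assms(3) by (intro nn_integral_mono_AE) (auto simp: indicator_def intro!: ennreal_leI)
  also have "\<dots> < \<infinity>"
    using finite_measure.emeasure_finite[OF assms(1), of "space M"]
    by (simp add: ennreal_mult_less_top top.not_eq_extremum)
  finally show "emeasure (density M (\<lambda>x. ennreal (f x))) (space (density M (\<lambda>x. ennreal (f x)))) \<noteq> \<infinity>"
    by simp
qed

lemma integral_mult_split_density:
  fixes \<mu> :: "'a \<Rightarrow> real"
  assumes dens: "\<nu>2 = density \<nu>1 (\<lambda>x. ennreal (\<mu> x))"
    and \<mu>: "\<mu> \<in> borel_measurable \<nu>1" "AE x in \<nu>1. 0 \<le> \<mu> x"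
    and "memL2 \<nu>1 v" "memL2 \<nu>2 w" "memL2 \<nu>1 f" "memL2 \<nu>2 f"
    and V: "V \<in> borel_measurable \<nu>1" "AE x in \<nu>1. V x = v x - \<mu> x * w x"
  shows "(\<integral>x. V x * f x \<partial>\<nu>1) = (\<integral>x. v x * f x \<partial>\<nu>1) - (\<integral>x. w x * f x \<partial>\<nu>2)"
proof -
  have meas: "(\<lambda>x. w x * f x) \<in> borel_measurable \<nu>1"
    using assms(5,7) dens by (auto simp: memL2_def)
  have "integrable \<nu>2 (\<lambda>x. w x * f x)"
    using assms(5,7) by (rule integrable_mult_memL2)
  then have wf: "integrable \<nu>1 (\<lambda>x. \<mu> x * (w x * f x))"
    using integrable_density[OF meas \<mu>] dens by simp
  have wf_eq: "(\<integral>x. w x * f x \<partial>\<nu>2) = (\<integral>x. \<mu> x * (w x * f x) \<partial>\<nu>1)"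
    using integral_density[OF meas \<mu>] dens by simp
  have vf: "integrable \<nu>1 (\<lambda>x. v x * f x)"
    using assms(4,6) by (rule integrable_mult_memL2)
  have "(\<integral>x. V x * f x \<partial>\<nu>1) = (\<integral>x. v x * f x - \<mu> x * (w x * f x) \<partial>\<nu>1)"
  proof (rule integral_cong_AE)
    show "(\<lambda>x. V x * f x) \<in> borel_measurable \<nu>1"
      using V(1) assms(6) by (auto simp: memL2_def)
    show "(\<lambda>x. v x * f x - \<mu> x * (w x * f x)) \<in> borel_measurable \<nu>1"
      using vf wf by (intro borel_measurable_diff) auto
    show "AE x in \<nu>1. V x * f x = v x * f x - \<mu> x * (w x * f x)"
      using V(2) by eventually_elim (simp add: left_diff_distrib)
  qed
  also have "\<dots> = (\<integral>x. v x * f x \<partial>\<nu>1) - (\<integral>x. w x * f x \<partial>\<nu>2)"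
    using vf wf wf_eq by simp
  finally show ?thesis .
qed

lemma opA_pairings:
  assumes fin: "finite_measure \<nu>1" "finite_measure \<nu>2"
    and dens: "\<nu>2 = density \<nu>1 (\<lambda>x. ennreal (\<mu> x))"
    and \<mu>: "\<mu> \<in> borel_measurable \<nu>1" "AE x in \<nu>1. 0 \<le> \<mu> x"
    and A: "opA m1 \<nu>1 m2 \<nu>2 \<mu> u V"
  shows "(\<integral>x. V x \<partial>\<nu>1) = 0"
    and "F1 m1 \<nu>1 u \<le> ereal (\<integral>x. V x * u x \<partial>\<nu>1)"
    and "\<delta> > 0 \<Longrightarrow> 0 \<le> (\<integral>x. V x * huber_deriv \<delta> (u x - c) \<partial>\<nu>1)"
proof -
  obtain v w where sd1: "subdiff_L2 \<nu>1 (F1 m1 \<nu>1) u v"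
    and sd2: "subdiff_L2 \<nu>2 (F1 m2 \<nu>2) u (\<lambda>x. - w x)"
    and V: "V \<in> borel_measurable \<nu>1" "AE x in \<nu>1. V x = v x - \<mu> x * w x"
    using A by (auto simp: opA_def Delta1_def memL2_def)
  have u: "memL2 \<nu>1 u" "memL2 \<nu>2 u" and v: "memL2 \<nu>1 v" and w: "memL2 \<nu>2 w"
    using sd1 sd2 memL2_uminus[of \<nu>2 "\<lambda>x. - w x"] by (auto simp: subdiff_L2_def)
  note split = integral_mult_split_density[OF dens \<mu> v w _ _ V]
  show "(\<integral>x. V x \<partial>\<nu>1) = 0"
    using split[OF finite_measure.memL2_const[OF fin(1)] finite_measure.memL2_const[OF fin(2)], of 1]
      finite_measure.subdiff_F1_integral_eq_0[OF fin(1) sd1]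
      finite_measure.subdiff_F1_integral_eq_0[OF fin(2) sd2]
    by simp
  have "(\<integral>x. w x * u x \<partial>\<nu>2) \<le> 0"
    using order_trans[OF F1_nonneg subdiff_F1_le_pairing[OF sd2]] by simp
  then show "F1 m1 \<nu>1 u \<le> ereal (\<integral>x. V x * u x \<partial>\<nu>1)"
    using subdiff_F1_le_pairing[OF sd1] split[OF u] by (auto elim: order_trans)
  assume "\<delta> > 0"
  have "u \<in> borel_measurable \<nu>1" "u \<in> borel_measurable \<nu>2"
    using u by (simp_all add: memL2_def)
  then have h: "memL2 \<nu>1 (\<lambda>x. huber_deriv \<delta> (u x - c))" "memL2 \<nu>2 (\<lambda>x. huber_deriv \<delta> (u x - c))"
    by (simp_all add: finite_measure.memL2_huber_deriv[OF fin(1) _ \<open>\<delta> > 0\<close>]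
        finite_measure.memL2_huber_deriv[OF fin(2) _ \<open>\<delta> > 0\<close>])
  show "0 \<le> (\<integral>x. V x * huber_deriv \<delta> (u x - c) \<partial>\<nu>1)"
    using split[OF h] finite_measure.subdiff_F1_huber_pairing_nonneg[OF fin(1) sd1 \<open>\<delta> > 0\<close>, of c]
      finite_measure.subdiff_F1_huber_pairing_nonneg[OF fin(2) sd2 \<open>\<delta> > 0\<close>, of c]
    by simp
qed

section \<open>Curves in \<open>L\<^sup>2\<close>\<close>

lemma l2norm_remainder_eq:
  assumes "h \<noteq> 0"
  shows "l2norm \<nu> (\<lambda>x. g x - f x - h * d x) = \<bar>h\<bar> * l2norm \<nu> (\<lambda>x. (g x - f x) / h - d x)"
proof -
  have "(\<lambda>x. g x - f x - h * d x) = (\<lambda>x. h * ((g x - f x) / h - d x))"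
    using assms by (simp add: fun_eq_iff field_simps)
  then show ?thesis
    by (simp add: l2norm_cmult)
qed

lemma l2norm_increment_le:
  assumes "memL2 \<nu> f" "memL2 \<nu> g" "memL2 \<nu> d" "h \<noteq> 0"
  shows "l2norm \<nu> (\<lambda>x. g x - f x) \<le> \<bar>h\<bar> * (l2norm \<nu> (\<lambda>x. (g x - f x) / h - d x) + l2norm \<nu> d)"
proof -
  have "l2norm \<nu> (\<lambda>x. g x - f x)
      \<le> l2norm \<nu> (\<lambda>x. g x - f x - h * d x) + l2norm \<nu> (\<lambda>x. h * d x)"
    using l2norm_triangle[OF memL2_diff[OF memL2_diff[OF assms(2,1)] memL2_cmult[OF assms(3), of h]]
        memL2_cmult[OF assms(3), of h]]
    by simp
  also have "\<dots> = \<bar>h\<bar> * (l2norm \<nu> (\<lambda>x. (g x - f x) / h - d x) + l2norm \<nu> d)"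
    unfolding l2norm_remainder_eq[OF assms(4)] l2norm_cmult by (simp add: algebra_simps)
  finally show ?thesis .
qed

lemma has_real_derivative_of_L2_expansion:
  fixes U :: "real \<Rightarrow> 'a \<Rightarrow> real" and F :: "real \<Rightarrow> real"
  assumes der: "has_L2_derivative \<nu> U t d" and "memL2 \<nu> (U t)" "B \<ge> 0" "K \<ge> 0"
    and expansion: "\<forall>\<^sub>F h in at 0. memL2 \<nu> (U (t + h)) \<and>
      \<bar>F (t + h) - F t - h * D\<bar> \<le> B * l2norm \<nu> (\<lambda>x. U (t + h) x - U t x - h * d x)
        + K * (l2norm \<nu> (\<lambda>x. U (t + h) x - U t x))\<^sup>2"
  shows "(F has_real_derivative D) (at t)"
proof -
  have "memL2 \<nu> d"
    using der by (simp add: has_L2_derivative_def)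
  define r where "r h = l2norm \<nu> (\<lambda>x. (U (t + h) x - U t x) / h - d x)" for h
  have "(r \<longlongrightarrow> 0) (at 0)"
    using der by (simp add: has_L2_derivative_def r_def[abs_def])
  then have lim: "((\<lambda>h. B * r h + K * \<bar>h\<bar> * (r h + l2norm \<nu> d)\<^sup>2) \<longlongrightarrow> 0) (at 0)"
    by (auto intro!: tendsto_eq_intros)
  have "\<forall>\<^sub>F h in at 0. norm ((F (t + h) - F t) / h - D) \<le> B * r h + K * \<bar>h\<bar> * (r h + l2norm \<nu> d)\<^sup>2"
    using expansion eventually_neq_at_within[of 0 0 UNIV]
  proof eventually_elim
    case (elim h)
    then have "h \<noteq> 0" and Uh: "memL2 \<nu> (U (t + h))"
      by auto
    have e: "l2norm \<nu> (\<lambda>x. U (t + h) x - U t x - h * d x) = \<bar>h\<bar> * r h"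
      using l2norm_remainder_eq[OF \<open>h \<noteq> 0\<close>] by (simp add: r_def)
    have "l2norm \<nu> (\<lambda>x. U (t + h) x - U t x) \<le> \<bar>h\<bar> * (r h + l2norm \<nu> d)"
      using l2norm_increment_le[OF \<open>memL2 \<nu> (U t)\<close> Uh \<open>memL2 \<nu> d\<close> \<open>h \<noteq> 0\<close>] by (simp add: r_def)
    then have "(l2norm \<nu> (\<lambda>x. U (t + h) x - U t x))\<^sup>2 \<le> (\<bar>h\<bar> * (r h + l2norm \<nu> d))\<^sup>2"
      by (intro power_mono) (simp_all add: l2norm_nonneg)
    then have k: "K * (l2norm \<nu> (\<lambda>x. U (t + h) x - U t x))\<^sup>2 \<le> K * (h\<^sup>2 * (r h + l2norm \<nu> d)\<^sup>2)"
      using \<open>K \<ge> 0\<close> by (simp add: mult_left_mono power_mult_distrib)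
    have "norm ((F (t + h) - F t) / h - D) = \<bar>F (t + h) - F t - h * D\<bar> / \<bar>h\<bar>"
      using \<open>h \<noteq> 0\<close> by (simp add: field_simps)
    also have "\<dots> \<le> (B * (\<bar>h\<bar> * r h) + K * (h\<^sup>2 * (r h + l2norm \<nu> d)\<^sup>2)) / \<bar>h\<bar>"
    proof (rule divide_right_mono)
      show "\<bar>F (t + h) - F t - h * D\<bar> \<le> B * (\<bar>h\<bar> * r h) + K * (h\<^sup>2 * (r h + l2norm \<nu> d)\<^sup>2)"
        using elim k unfolding e by linarith
    qed simp
    also have "\<dots> = B * r h + K * \<bar>h\<bar> * (r h + l2norm \<nu> d)\<^sup>2"
      using \<open>h \<noteq> 0\<close> by (simp add: field_simps power2_eq_square abs_mult_self_eq)
    finally show ?case .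
  qed
  then have "((\<lambda>h. (F (t + h) - F t) / h - D) \<longlongrightarrow> 0) (at 0)"
    by (rule Lim_null_comparison[OF _ lim])
  then show ?thesis
    unfolding DERIV_def by (simp add: LIM_zero_iff)
qed

locale L2_trajectory = finite_measure \<nu> for \<nu> :: "'a measure" +
  fixes u ut :: "real \<Rightarrow> 'a \<Rightarrow> real" and N :: "real set"
  assumes memL2_u: "\<And>t. 0 \<le> t \<Longrightarrow> memL2 \<nu> (u t)"
    and continuous_u: "\<And>t. 0 \<le> t \<Longrightarrow> ((\<lambda>s. l2norm \<nu> (\<lambda>x. u s x - u t x)) \<longlongrightarrow> 0) (at t within {0..})"
    and abs_cont_u: "\<And>a b. 0 < a \<Longrightarrow> a < b \<Longrightarrow> abs_cont_L2 \<nu> u a b"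
    and negligible_N: "negligible N"
    and derivative_u: "\<And>t. 0 < t \<Longrightarrow> t \<notin> N \<Longrightarrow> has_L2_derivative \<nu> u t (ut t)"
begin

lemma nonincreasing_if_derivative_nonpos:
  fixes F :: "real \<Rightarrow> real"
  assumes "0 < a" "a \<le> b" "L \<ge> 0" "K \<ge> 0"
    and lipschitz: "\<And>s t. a \<le> s \<Longrightarrow> s \<le> t \<Longrightarrow> t \<le> b \<Longrightarrow>
      \<bar>F t - F s\<bar> \<le> L * l2norm \<nu> (\<lambda>x. u t x - u s x) + K * (t - s)"
    and deriv: "\<And>r. a < r \<Longrightarrow> r \<le> b \<Longrightarrow> r \<notin> N \<Longrightarrow> \<exists>D\<le>0. (F has_real_derivative D) (at r)"
  shows "F b \<le> F a"
proof (cases "a = b")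
  case False
  then have "absolutely_continuous_real F a b"
    using abs_cont_u[of a b] assms(1,2)
    by (intro absolutely_continuous_wrt_dominated[OF _ \<open>L \<ge> 0\<close> \<open>K \<ge> 0\<close> lipschitz])
      (simp_all add: abs_cont_L2_iff)
  then show ?thesis
    using deriv by (intro absolutely_continuous_real_nonincreasing[OF \<open>a \<le> b\<close> _ negligible_N]) auto
qed simp

lemma le_initial_value:
  fixes F :: "real \<Rightarrow> real"
  assumes "0 < t" "L \<ge> 0" "K \<ge> 0"
    and lipschitz: "\<And>s s'. 0 \<le> s \<Longrightarrow> s \<le> s' \<Longrightarrow> s' \<le> t \<Longrightarrow>
      \<bar>F s' - F s\<bar> \<le> L * l2norm \<nu> (\<lambda>x. u s' x - u s x) + K * (s' - s)"
    and deriv: "\<And>r. 0 < r \<Longrightarrow> r \<le> t \<Longrightarrow> r \<notin> N \<Longrightarrow> \<exists>D\<le>0. (F has_real_derivative D) (at r)"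
  shows "F t \<le> F 0"
proof -
  have near_0: "\<forall>\<^sub>F a in at_right 0. 0 < a \<and> a < t"
    using eventually_at_right_less[of 0] order_tendstoD(2)[OF tendsto_ident_at \<open>0 < t\<close>]
    by (rule eventually_conj)
  have "F t \<le> F a" if "0 < a" "a < t" for a
  proof (rule nonincreasing_if_derivative_nonpos[OF \<open>0 < a\<close> _ \<open>L \<ge> 0\<close> \<open>K \<ge> 0\<close>])
    show "\<bar>F s' - F s\<bar> \<le> L * l2norm \<nu> (\<lambda>x. u s' x - u s x) + K * (s' - s)"
      if "a \<le> s" "s \<le> s'" "s' \<le> t" for s s'
      using lipschitz that \<open>0 < a\<close> by simp
    show "\<exists>D\<le>0. (F has_real_derivative D) (at r)" if "a < r" "r \<le> t" "r \<notin> N" for r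
      using deriv that \<open>0 < a\<close> by simp
  qed (use that in simp)
  then have below: "\<forall>\<^sub>F a in at_right 0. F t \<le> F a"
    using near_0 by (auto elim: eventually_mono)
  have "(F \<longlongrightarrow> F 0) (at_right 0)"
  proof -
    have "((\<lambda>s. l2norm \<nu> (\<lambda>x. u s x - u 0 x)) \<longlongrightarrow> 0) (at_right 0)"
      using continuous_u[of 0] by (simp add: at_within_Ici_at_right)
    then have "((\<lambda>s. L * l2norm \<nu> (\<lambda>x. u s x - u 0 x) + K * s) \<longlongrightarrow> L * 0 + K * 0) (at_right 0)"
      by (intro tendsto_add tendsto_mult tendsto_const tendsto_ident_at)
    then have bound_0: "((\<lambda>s. L * l2norm \<nu> (\<lambda>x. u s x - u 0 x) + K * s) \<longlongrightarrow> 0) (at_right 0)"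
      by simp
    have "norm (F s - F 0) \<le> L * l2norm \<nu> (\<lambda>x. u s x - u 0 x) + K * s" if "0 < s \<and> s < t" for s
      using lipschitz[of 0 s] that by simp
    then have "\<forall>\<^sub>F s in at_right 0. norm (F s - F 0) \<le> L * l2norm \<nu> (\<lambda>x. u s x - u 0 x) + K * s"
      using near_0 by (auto elim: eventually_mono)
    then have "((\<lambda>s. F s - F 0) \<longlongrightarrow> 0) (at_right 0)"
      using bound_0 by (rule Lim_null_comparison)
    then show ?thesis
      by (simp add: LIM_zero_iff)
  qed
  from tendsto_le[OF trivial_limit_at_right_real this tendsto_const below]
  show ?thesis .
qed

lemma has_real_derivative_if_expansion:
  fixes F :: "real \<Rightarrow> real"
  assumes "0 < r" "r \<notin> N" "B \<ge> 0" "K \<ge> 0"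
    and expansion: "\<And>h. 0 \<le> r + h \<Longrightarrow> \<bar>F (r + h) - F r - h * D\<bar> \<le>
      B * l2norm \<nu> (\<lambda>x. u (r + h) x - u r x - h * ut r x) + K * (l2norm \<nu> (\<lambda>x. u (r + h) x - u r x))\<^sup>2"
  shows "(F has_real_derivative D) (at r)"
proof (rule has_real_derivative_of_L2_expansion[OF derivative_u[OF assms(1,2)] memL2_u \<open>B \<ge> 0\<close> \<open>K \<ge> 0\<close>])
  have "\<forall>\<^sub>F h in at 0. h \<in> ball 0 r"
    using \<open>0 < r\<close> by (intro eventually_at_in_open') auto
  then show "\<forall>\<^sub>F h in at 0. memL2 \<nu> (u (r + h)) \<and>
      \<bar>F (r + h) - F r - h * D\<bar> \<le> B * l2norm \<nu> (\<lambda>x. u (r + h) x - u r x - h * ut r x)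
        + K * (l2norm \<nu> (\<lambda>x. u (r + h) x - u r x))\<^sup>2"
    by eventually_elim (auto simp: dist_real_def intro!: memL2_u expansion)
qed (use \<open>0 < r\<close> in simp)

lemma memL2_ut: "0 < t \<Longrightarrow> t \<notin> N \<Longrightarrow> memL2 \<nu> (ut t)"
  using derivative_u by (simp add: has_L2_derivative_def)

lemma integral_conserved:
  assumes zero: "\<And>t. 0 < t \<Longrightarrow> t \<notin> N \<Longrightarrow> (\<integral>x. ut t x \<partial>\<nu>) = 0" and "0 \<le> t"
  shows "(\<integral>x. u t x \<partial>\<nu>) = (\<integral>x. u 0 x \<partial>\<nu>)"
proof (cases "t = 0")
  case False
  with \<open>0 \<le> t\<close> have "0 < t"
    by simp
  define S where "S = sqrt (measure \<nu> (space \<nu>))"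
  define I where "I s = (\<integral>x. u s x \<partial>\<nu>)" for s
  have "S \<ge> 0"
    by (simp add: S_def)
  have lipschitz: "\<bar>I s' - I s\<bar> \<le> S * l2norm \<nu> (\<lambda>x. u s' x - u s x) + 0 * (s' - s)"
    if "0 \<le> s" "s \<le> s'" for s s'
    using abs_integral_diff_le_l2norm[OF memL2_u memL2_u, of s s'] that by (simp add: I_def S_def)
  have deriv: "(I has_real_derivative 0) (at r)" if r: "0 < r" "r \<notin> N" for r
  proof (rule has_real_derivative_if_expansion[OF r \<open>S \<ge> 0\<close> order_refl])
    fix h assume "0 \<le> r + h"
    then show "\<bar>I (r + h) - I r - h * 0\<bar> \<le> S * l2norm \<nu> (\<lambda>x. u (r + h) x - u r x - h * ut r x)
        + 0 * (l2norm \<nu> (\<lambda>x. u (r + h) x - u r x))\<^sup>2"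
      using integral_expansion[OF memL2_u memL2_u memL2_ut[OF r], of r "r + h" h] zero[OF r] r
      by (simp add: I_def S_def)
  qed
  have "I t \<le> I 0"
    using deriv by (intro le_initial_value[OF \<open>0 < t\<close> \<open>S \<ge> 0\<close> order_refl lipschitz]) auto
  moreover have "- I t \<le> - I 0"
  proof (rule le_initial_value[where F = "\<lambda>s. - I s", OF \<open>0 < t\<close> \<open>S \<ge> 0\<close> order_refl])
    show "\<bar>- I s' - - I s\<bar> \<le> S * l2norm \<nu> (\<lambda>x. u s' x - u s x) + 0 * (s' - s)"
      if "0 \<le> s" "s \<le> s'" "s' \<le> t" for s s'
      using lipschitz[OF that(1,2)] by simp
    show "\<exists>D\<le>0. ((\<lambda>s. - I s) has_real_derivative D) (at r)" if "0 < r" "r \<le> t" "r \<notin> N" for r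
      using DERIV_minus[OF deriv[OF that(1,3)]] by auto
  qed
  ultimately show ?thesis
    by (simp add: I_def)
qed simp

lemma huber_integral_nonincreasing:
  assumes "\<delta> > 0"
    and sign: "\<And>t. 0 < t \<Longrightarrow> t \<notin> N \<Longrightarrow> (\<integral>x. huber_deriv \<delta> (u t x - c) * ut t x \<partial>\<nu>) \<le> 0"
    and "0 < s" "s \<le> t"
  shows "(\<integral>x. huber \<delta> (u t x - c) \<partial>\<nu>) \<le> (\<integral>x. huber \<delta> (u s x - c) \<partial>\<nu>)"
proof -
  define S where "S = sqrt (measure \<nu> (space \<nu>))"
  define P where "P r = (\<integral>x. huber \<delta> (u r x - c) \<partial>\<nu>)" for r
  have "S \<ge> 0" "1 / \<delta> \<ge> 0"
    using \<open>\<delta> > 0\<close> by (simp_all add: S_def)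
  have "P t \<le> P s"
  proof (rule nonincreasing_if_derivative_nonpos[OF \<open>0 < s\<close> \<open>s \<le> t\<close> \<open>S \<ge> 0\<close> order_refl])
    show "\<bar>P t' - P s'\<bar> \<le> S * l2norm \<nu> (\<lambda>x. u t' x - u s' x) + 0 * (t' - s')"
      if "s \<le> s'" "s' \<le> t'" "t' \<le> t" for s' t'
      using abs_huber_integral_diff_le[OF memL2_u memL2_u \<open>\<delta> > 0\<close>, of s' t' c] that \<open>0 < s\<close>
      by (simp add: P_def S_def)
    show "\<exists>D\<le>0. (P has_real_derivative D) (at r)" if "s < r" "r \<le> t" "r \<notin> N" for r
    proof (intro exI conjI)
      have r: "0 < r" "r \<notin> N"
        using that \<open>0 < s\<close> by simp_all
      show "(P has_real_derivative (\<integral>x. huber_deriv \<delta> (u r x - c) * ut r x \<partial>\<nu>)) (at r)"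
      proof (rule has_real_derivative_if_expansion[OF r \<open>S \<ge> 0\<close> \<open>1 / \<delta> \<ge> 0\<close>])
        fix h assume "0 \<le> r + h"
        then show "\<bar>P (r + h) - P r - h * (\<integral>x. huber_deriv \<delta> (u r x - c) * ut r x \<partial>\<nu>)\<bar>
            \<le> S * l2norm \<nu> (\<lambda>x. u (r + h) x - u r x - h * ut r x)
              + 1 / \<delta> * (l2norm \<nu> (\<lambda>x. u (r + h) x - u r x))\<^sup>2"
          using huber_integral_expansion[OF memL2_u memL2_u memL2_ut[OF r] \<open>\<delta> > 0\<close>, of r "r + h" c h] r
          by (simp add: P_def S_def)
      qed
      show "(\<integral>x. huber_deriv \<delta> (u r x - c) * ut r x \<partial>\<nu>) \<le> 0"
        using sign[OF r] .
    qed
  qed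
  then show ?thesis
    by (simp add: P_def)
qed

lemma integral_abs_diff_nonincreasing:
  assumes sign: "\<And>\<delta> t. 0 < \<delta> \<Longrightarrow> 0 < t \<Longrightarrow> t \<notin> N \<Longrightarrow> (\<integral>x. huber_deriv \<delta> (u t x - c) * ut t x \<partial>\<nu>) \<le> 0"
    and "0 < s" "s \<le> t"
  shows "(\<integral>x. \<bar>u t x - c\<bar> \<partial>\<nu>) \<le> (\<integral>x. \<bar>u s x - c\<bar> \<partial>\<nu>)"
proof (rule field_le_epsilon)
  fix \<epsilon> :: real assume "\<epsilon> > 0"
  define m where "m = measure \<nu> (space \<nu>)"
  define \<delta> where "\<delta> = \<epsilon> / (m + 1)"
  have "m \<ge> 0"
    by (simp add: m_def)
  then have "\<delta> > 0"
    using \<open>\<epsilon> > 0\<close> by (simp add: \<delta>_def)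
  have "\<delta> / 2 * m \<le> \<epsilon>"
    using \<open>\<epsilon> > 0\<close> \<open>m \<ge> 0\<close> by (simp add: \<delta>_def field_simps)
  have u: "memL2 \<nu> (\<lambda>x. u r x - c)" if "0 \<le> r" for r
    using memL2_diff[OF memL2_u[OF that] memL2_const] .
  have "(\<integral>x. \<bar>u t x - c\<bar> \<partial>\<nu>) \<le> (\<integral>x. huber \<delta> (u t x - c) + \<delta> / 2 \<partial>\<nu>)"
    using integrable_memL2[OF u] integrable_huber[OF memL2_u \<open>\<delta> > 0\<close>] huber_abs_bounds(3)[OF \<open>\<delta> > 0\<close>]
      \<open>0 < s\<close> \<open>s \<le> t\<close> by (intro integral_mono) auto
  also have "\<dots> = (\<integral>x. huber \<delta> (u t x - c) \<partial>\<nu>) + \<delta> / 2 * m"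
    using integrable_huber[OF memL2_u \<open>\<delta> > 0\<close>, of t c] \<open>0 < s\<close> \<open>s \<le> t\<close> by (simp add: m_def)
  finally have "(\<integral>x. \<bar>u t x - c\<bar> \<partial>\<nu>) \<le> (\<integral>x. huber \<delta> (u t x - c) \<partial>\<nu>) + \<delta> / 2 * m" .
  moreover have "(\<integral>x. huber \<delta> (u t x - c) \<partial>\<nu>) \<le> (\<integral>x. huber \<delta> (u s x - c) \<partial>\<nu>)"
    using sign \<open>\<delta> > 0\<close> by (intro huber_integral_nonincreasing \<open>0 < s\<close> \<open>s \<le> t\<close>)
  moreover have "(\<integral>x. huber \<delta> (u s x - c) \<partial>\<nu>) \<le> (\<integral>x. \<bar>u s x - c\<bar> \<partial>\<nu>)"
    using integrable_memL2[OF u] integrable_huber[OF memL2_u \<open>\<delta> > 0\<close>] huber_abs_bounds(2)[OF \<open>\<delta> > 0\<close>]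
      \<open>0 < s\<close> by (intro integral_mono) auto
  ultimately show "(\<integral>x. \<bar>u t x - c\<bar> \<partial>\<nu>) \<le> (\<integral>x. \<bar>u s x - c\<bar> \<partial>\<nu>) + \<epsilon>"
    using \<open>\<delta> / 2 * m \<le> \<epsilon>\<close> by linarith
qed

lemma continuous_on_l2norm_u: "continuous_on {0..} (\<lambda>r. l2norm \<nu> (u r))"
  unfolding continuous_on_def
proof (intro ballI)
  fix t :: real assume "t \<in> {0..}"
  have "\<forall>\<^sub>F s in at t within {0..}. norm (l2norm \<nu> (u s) - l2norm \<nu> (u t)) \<le> l2norm \<nu> (\<lambda>x. u s x - u t x)"
    using l2norm_diff_triangle[OF memL2_u memL2_u] \<open>t \<in> {0..}\<close>
    by (auto simp: eventually_at_filter)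
  then have "((\<lambda>s. l2norm \<nu> (u s) - l2norm \<nu> (u t)) \<longlongrightarrow> 0) (at t within {0..})"
    by (rule Lim_null_comparison) (use continuous_u \<open>t \<in> {0..}\<close> in simp)
  then show "((\<lambda>r. l2norm \<nu> (u r)) \<longlongrightarrow> l2norm \<nu> (u t)) (at t within {0..})"
    by (simp add: LIM_zero_iff)
qed

lemma l2norm_u_bounded:
  obtains R where "R \<ge> 0" "\<And>r. r \<in> {0..t} \<Longrightarrow> l2norm \<nu> (u r) \<le> R"
proof -
  have "continuous_on {0..t} (\<lambda>r. l2norm \<nu> (u r))"
    by (rule continuous_on_subset[OF continuous_on_l2norm_u]) auto
  then have "bounded ((\<lambda>r. l2norm \<nu> (u r)) ` {0..t})"
    by (intro compact_imp_bounded compact_continuous_image) auto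
  then obtain B where B: "\<forall>x\<in>(\<lambda>r. l2norm \<nu> (u r)) ` {0..t}. norm x \<le> B"
    unfolding bounded_iff by blast
  show thesis
  proof (rule that[of "max B 0"])
    show "l2norm \<nu> (u r) \<le> max B 0" if "r \<in> {0..t}" for r
      using B that abs_ge_self[of "l2norm \<nu> (u r)"] by (force intro: max.coboundedI1)
  qed simp
qed

lemma energy_estimate:
  assumes "0 < t" "C \<ge> 0"
    and dissipation: "\<And>r. 0 < r \<Longrightarrow> r \<le> t \<Longrightarrow> r \<notin> N \<Longrightarrow> C \<le> - (\<integral>x. u r x * ut r x \<partial>\<nu>)"
  shows "t * C \<le> (l2norm \<nu> (u 0))\<^sup>2 / 2"
proof -
  define E where "E r = (l2norm \<nu> (u r))\<^sup>2 / 2 + r * C" for r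
  obtain R where "R \<ge> 0" and R: "\<And>r. r \<in> {0..t} \<Longrightarrow> l2norm \<nu> (u r) \<le> R"
    using l2norm_u_bounded[of t] by blast
  have "E t \<le> E 0"
  proof (rule le_initial_value[OF \<open>0 < t\<close> \<open>R \<ge> 0\<close> \<open>C \<ge> 0\<close>])
    fix s s' assume s: "0 \<le> s" "s \<le> s'" "s' \<le> t"
    have "\<bar>(l2norm \<nu> (u s'))\<^sup>2 - (l2norm \<nu> (u s))\<^sup>2\<bar>
        \<le> l2norm \<nu> (\<lambda>x. u s' x - u s x) * (l2norm \<nu> (u s') + l2norm \<nu> (u s))"
      using abs_l2norm_power2_diff_le[OF memL2_u memL2_u] s by simp
    also have "\<dots> \<le> l2norm \<nu> (\<lambda>x. u s' x - u s x) * (2 * R)"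
      using R[of s] R[of s'] s by (intro mult_left_mono) (auto simp: l2norm_nonneg)
    finally have norms: "\<bar>(l2norm \<nu> (u s'))\<^sup>2 - (l2norm \<nu> (u s))\<^sup>2\<bar> / 2 \<le> R * l2norm \<nu> (\<lambda>x. u s' x - u s x)"
      by (simp add: mult.commute mult.left_commute)
    have "E s' - E s = ((l2norm \<nu> (u s'))\<^sup>2 - (l2norm \<nu> (u s))\<^sup>2) / 2 + C * (s' - s)"
      by (simp add: E_def field_simps)
    then have "\<bar>E s' - E s\<bar> \<le> \<bar>(l2norm \<nu> (u s'))\<^sup>2 - (l2norm \<nu> (u s))\<^sup>2\<bar> / 2 + C * (s' - s)"
      using abs_triangle_ineq[of "((l2norm \<nu> (u s'))\<^sup>2 - (l2norm \<nu> (u s))\<^sup>2) / 2" "C * (s' - s)"] s \<open>C \<ge> 0\<close>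
      by simp
    with norms show "\<bar>E s' - E s\<bar> \<le> R * l2norm \<nu> (\<lambda>x. u s' x - u s x) + C * (s' - s)"
      by linarith
  next
    fix r assume r: "0 < r" "r \<le> t" "r \<notin> N"
    have "(E has_real_derivative (\<integral>x. u r x * ut r x \<partial>\<nu>) + C) (at r)"
    proof (rule has_real_derivative_if_expansion[OF r(1,3) l2norm_nonneg, where K = "1 / 2"])
      fix h assume "0 \<le> r + h"
      then show "\<bar>E (r + h) - E r - h * ((\<integral>x. u r x * ut r x \<partial>\<nu>) + C)\<bar>
          \<le> l2norm \<nu> (u r) * l2norm \<nu> (\<lambda>x. u (r + h) x - u r x - h * ut r x)
            + 1 / 2 * (l2norm \<nu> (\<lambda>x. u (r + h) x - u r x))\<^sup>2"
        using l2norm_power2_expansion[OF memL2_u memL2_u memL2_ut[OF r(1,3)], of r "r + h" h] r(1)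
        by (simp add: E_def algebra_simps)
    qed simp
    moreover have "(\<integral>x. u r x * ut r x \<partial>\<nu>) + C \<le> 0"
      using dissipation[OF r] by simp
    ultimately show "\<exists>D\<le>0. (E has_real_derivative D) (at r)"
      by blast
  qed
  then show ?thesis
    unfolding E_def using zero_le_power2[of "l2norm \<nu> (u t)"] by linarith
qed

theorem L1_decay:
  assumes "0 < lam" "0 < t"
    and mass: "\<And>t. 0 < t \<Longrightarrow> t \<notin> N \<Longrightarrow> (\<integral>x. ut t x \<partial>\<nu>) = 0"
    and sign: "\<And>\<delta> c t. 0 < \<delta> \<Longrightarrow> 0 < t \<Longrightarrow> t \<notin> N \<Longrightarrow>
      (\<integral>x. huber_deriv \<delta> (u t x - c) * ut t x \<partial>\<nu>) \<le> 0"
    and dissipation: "\<And>t. 0 < t \<Longrightarrow> t \<notin> N \<Longrightarrow>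
      lam * (\<integral>x. \<bar>u t x - (\<integral>y. u t y \<partial>\<nu>) / measure \<nu> (space \<nu>)\<bar> \<partial>\<nu>) \<le> - (\<integral>x. u t x * ut t x \<partial>\<nu>)"
  shows "(\<integral>x. \<bar>u t x - (\<integral>y. u 0 y \<partial>\<nu>) / measure \<nu> (space \<nu>)\<bar> \<partial>\<nu>)
    \<le> 1 / (2 * lam) * ((l2norm \<nu> (u 0))\<^sup>2 / t)"
proof -
  define c where "c = (\<integral>y. u 0 y \<partial>\<nu>) / measure \<nu> (space \<nu>)"
  define \<phi> where "\<phi> r = (\<integral>x. \<bar>u r x - c\<bar> \<partial>\<nu>)" for r
  have "t * (lam * \<phi> t) \<le> (l2norm \<nu> (u 0))\<^sup>2 / 2"
  proof (rule energy_estimate[OF \<open>0 < t\<close>])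
    show "0 \<le> lam * \<phi> t"
      using \<open>0 < lam\<close> by (simp add: \<phi>_def)
    fix r assume r: "0 < r" "r \<le> t" "r \<notin> N"
    have "lam * \<phi> t \<le> lam * \<phi> r"
      using integral_abs_diff_nonincreasing[OF sign r(1,2)] \<open>0 < lam\<close> by (simp add: \<phi>_def)
    also have "\<dots> \<le> - (\<integral>x. u r x * ut r x \<partial>\<nu>)"
      using dissipation[OF r(1,3)] integral_conserved[OF mass, of r] r(1) by (simp add: \<phi>_def c_def)
    finally show "lam * \<phi> t \<le> - (\<integral>x. u r x * ut r x \<partial>\<nu>)" .
  qed
  then show ?thesis
    using \<open>0 < lam\<close> \<open>0 < t\<close> by (simp add: \<phi>_def c_def field_simps)
qed

end

lemma strong_solution_trajectory:
  assumes "finite_measure \<nu>" and sol: "strong_solution \<nu> A u0 u"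
  obtains ut N where "L2_trajectory \<nu> u ut N"
    and "\<And>t. 0 < t \<Longrightarrow> t \<notin> N \<Longrightarrow> A (u t) (\<lambda>x. - ut t x)"
    and "AE x in \<nu>. u 0 x = u0 x"
proof -
  obtain ut where L2: "\<forall>t\<ge>0. memL2 \<nu> (u t)"
    and cont: "\<forall>t\<ge>0. ((\<lambda>s. l2norm \<nu> (\<lambda>x. u s x - u t x)) \<longlongrightarrow> 0) (at t within {0..})"
    and init: "AE x in \<nu>. u 0 x = u0 x"
    and ac: "\<forall>a b. 0 < a \<and> a < b \<longrightarrow> abs_cont_L2 \<nu> u a b"
    and ae: "AE t in lborel. 0 < t \<longrightarrow> has_L2_derivative \<nu> u t (ut t) \<and> A (u t) (\<lambda>x. - ut t x)"
    using sol unfolding strong_solution_def by blast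
  from AE_completion[OF ae] obtain N
    where bad: "{t \<in> space lebesgue. \<not> (0 < t \<longrightarrow> has_L2_derivative \<nu> u t (ut t) \<and> A (u t) (\<lambda>x. - ut t x))} \<subseteq> N"
      and "emeasure lebesgue N = 0" "N \<in> sets lebesgue"
    by (rule AE_E)
  then have N: "negligible N"
    by (simp add: negligible_iff_null_sets null_sets_def)
  have good: "has_L2_derivative \<nu> u t (ut t) \<and> A (u t) (\<lambda>x. - ut t x)" if "0 < t" "t \<notin> N" for t
    using bad that by auto
  have "L2_trajectory \<nu> u ut N"
    using assms(1) L2 cont ac N good by (simp add: L2_trajectory_def L2_trajectory_axioms_def)
  with good init show thesis
    using that by blast
qed

lemma (in L2_trajectory) L1_decay_opA:
  assumes "finite_measure \<nu>2" and dens: "\<nu>2 = density \<nu> (\<lambda>x. ennreal (\<mu> x))"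
    and \<mu>: "\<mu> \<in> borel_measurable \<nu>" "AE x in \<nu>. 0 \<le> \<mu> x"
    and A: "\<And>t. 0 < t \<Longrightarrow> t \<notin> N \<Longrightarrow> opA m1 \<nu> m2 \<nu>2 \<mu> (u t) (\<lambda>x. - ut t x)"
    and poincare: "\<forall>v. integrable \<nu> v \<longrightarrow>
      ereal (lam * (\<integral>x. \<bar>v x - (\<integral>y. v y \<partial>\<nu>) / measure \<nu> (space \<nu>)\<bar> \<partial>\<nu>)) \<le> F1 m1 \<nu> v"
    and "0 < lam" "0 < t"
  shows "(\<integral>x. \<bar>u t x - (\<integral>y. u 0 y \<partial>\<nu>) / measure \<nu> (space \<nu>)\<bar> \<partial>\<nu>)
    \<le> 1 / (2 * lam) * ((l2norm \<nu> (u 0))\<^sup>2 / t)"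
proof (rule L1_decay[OF \<open>0 < lam\<close> \<open>0 < t\<close>])
  note pairings = opA_pairings[OF finite_measure_axioms \<open>finite_measure \<nu>2\<close> dens \<mu> A]
  show "(\<integral>x. ut r x \<partial>\<nu>) = 0" if "0 < r" "r \<notin> N" for r
    using pairings(1)[OF that] by simp
  show "(\<integral>x. huber_deriv \<delta> (u r x - c) * ut r x \<partial>\<nu>) \<le> 0" if "0 < \<delta>" "0 < r" "r \<notin> N" for \<delta> c r
    using pairings(3)[OF that(2,3,1), of c] by (simp add: mult.commute)
  show "lam * (\<integral>x. \<bar>u r x - (\<integral>y. u r y \<partial>\<nu>) / measure \<nu> (space \<nu>)\<bar> \<partial>\<nu>)
      \<le> - (\<integral>x. u r x * ut r x \<partial>\<nu>)" if "0 < r" "r \<notin> N" for r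
  proof -
    have "ereal (lam * (\<integral>x. \<bar>u r x - (\<integral>y. u r y \<partial>\<nu>) / measure \<nu> (space \<nu>)\<bar> \<partial>\<nu>)) \<le> F1 m1 \<nu> (u r)"
      using poincare integrable_memL2[OF memL2_u] that(1) by simp
    also have "\<dots> \<le> ereal (\<integral>x. - ut r x * u r x \<partial>\<nu>)"
      by (rule pairings(2)[OF that])
    finally show ?thesis
      by (simp add: mult.commute)
  qed
qed

theorem mainTheorem10:
  fixes M :: "'a measure" and m1 m2 :: "'a \<Rightarrow> 'a measure" and \<nu>1 \<nu>2 :: "'a measure"
    and \<mu> :: "'a \<Rightarrow> real" and lam :: real
    and u0 :: "'a \<Rightarrow> real" and u :: "real \<Rightarrow> 'a \<Rightarrow> real"
  assumes rw1: "reversible_rw_space M m1 \<nu>1"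
    and rw2: "reversible_rw_space M m2 \<nu>2"
    and ac: "absolutely_continuous \<nu>1 \<nu>2"
    and mu_meas: "\<mu> \<in> borel_measurable M"
    and mu_nonneg: "\<forall>x\<in>space M. 0 \<le> \<mu> x"
    and mu_RN: "\<nu>2 = density \<nu>1 (\<lambda>x. ennreal (\<mu> x))"
    and mu_Linf: "\<exists>C. AE x in \<nu>1. \<bar>\<mu> x\<bar> \<le> C"
    and mu_pos: "AE x in \<nu>1. 0 < \<mu> x"
    and fin: "emeasure \<nu>1 (space \<nu>1) < \<infinity>"
    and lam_pos: "0 < lam"
    and poincare: "\<forall>v. integrable \<nu>1 v \<longrightarrow>
        ereal (lam * (\<integral>x. \<bar>v x - (\<integral>y. v y \<partial>\<nu>1) / measure \<nu>1 (space \<nu>1)\<bar> \<partial>\<nu>1))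
          \<le> F1 m1 \<nu>1 v"
    and u0_L2: "memL2 \<nu>1 u0"
    and sol: "strong_solution \<nu>1 (opA m1 \<nu>1 m2 \<nu>2 \<mu>) u0 u"
  shows "\<forall>t>0. (\<integral>x. \<bar>u t x - (\<integral>y. u0 y \<partial>\<nu>1) / measure \<nu>1 (space \<nu>1)\<bar> \<partial>\<nu>1)
           \<le> 1 / (2 * lam) * ((l2norm \<nu>1 u0)\<^sup>2 / t)"
proof -
  have sets: "sets \<nu>1 = sets M"
    using rw1 by (simp add: reversible_rw_space_def rw_space_def)
  have \<mu>: "\<mu> \<in> borel_measurable \<nu>1" "AE x in \<nu>1. 0 \<le> \<mu> x"
    using mu_meas mu_nonneg measurable_cong_sets[OF sets refl] sets_eq_imp_space_eq[OF sets] by auto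
  have fin1: "finite_measure \<nu>1"
    using fin by (intro finite_measureI) simp
  obtain C where "AE x in \<nu>1. \<bar>\<mu> x\<bar> \<le> C"
    using mu_Linf by blast
  then have fin2: "finite_measure \<nu>2"
    unfolding mu_RN by (rule finite_measure_density_bounded[OF fin1 \<mu>(1)])
  obtain ut N where "L2_trajectory \<nu>1 u ut N"
    and A: "\<And>t. 0 < t \<Longrightarrow> t \<notin> N \<Longrightarrow> opA m1 \<nu>1 m2 \<nu>2 \<mu> (u t) (\<lambda>x. - ut t x)"
    and init: "AE x in \<nu>1. u 0 x = u0 x"
    using strong_solution_trajectory[OF fin1 sol] by blast
  then interpret L2_trajectory \<nu>1 u ut N
    by simp
  note decay = L1_decay_opA[OF fin2 mu_RN \<mu> A poincare lam_pos]
  have "u 0 \<in> borel_measurable \<nu>1" "u0 \<in> borel_measurable \<nu>1"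
    using memL2_u[of 0] u0_L2 by (simp_all add: memL2_def)
  then have "(\<integral>x. u 0 x \<partial>\<nu>1) = (\<integral>x. u0 x \<partial>\<nu>1)" "(\<integral>x. (u 0 x)\<^sup>2 \<partial>\<nu>1) = (\<integral>x. (u0 x)\<^sup>2 \<partial>\<nu>1)"
    using init by (auto intro: integral_cong_AE elim: eventually_mono)
  with decay show ?thesis
    by (simp add: l2norm_def)
qed

end
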